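(* Let $v\in\mathbb N_0^N$, $\mathbb T\in\mathrm{Tab}_\lambda$ and $1\le j\le N$. Then there are elements $H_u$ ($u\in\mathbb N_0^N$, $u\trianglelefteq v$) of the Hecke algebra such that $$x^v\,\mathbb T\,\Xi_j=x^v\otimes(\mathbb TH_v)+\sum_{v'\lhd v}x^{v'}\otimes(\mathbb TH_{v'}).$$
   Context: $N\ge2$, $q,s$ indeterminates, $K=\mathbb C(q,s)$. Operators act on the right, composed left to right. $\mathcal H_N(s)$ is generated by $T_1,\dots,T_{N-1}$ with $(T_i+1)(T_i-s)=0$ and braid relations. $\lambda$ is a partition of $N$ (French convention, rows numbered bottom to top); $\mathrm{Tab}_\lambda$ = reverse standard tableaux (bijective fillings by $1,\dots,N$ strictly decreasing left to right in rows and bottom to top in columns); $\mathrm{CT}_{\mathbb T}[i]$ = column minus row of the cell of $i$; $\mathbb T^{(i,j)}$ exchanges $i,j$. $V_\lambda$ has basis $\mathrm{Tab}_\lambda$ with right action $\mathbb TT_i=s\mathbb T$ if $i,i+1$ share a row, $-\mathbb T$ if they share a column, and if $i$ is in a higher row than $i+1$, with $m=\mathrm{CT}_{\mathbb T}[i+1]-\mathrm{CT}_{\mathbb T}[i]>0$, $\mathbb TT_i=\frac{s-1}{1-s^m}\mathbb T+\frac{s(1-s^{m+1})(1-s^{m-1})}{(1-s^m)^2}\mathbb T^{(i,i+1)}$; the remaining case is determined by this formula for $\mathbb T^{(i,i+1)}$ and the quadratic relation. $\mathcal M_\lambda=K[x_1,\dots,x_N]\otimes V_\lambda$, $x^v=x_1^{v_1}\cdots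 x_N^{v_N}$. With $p^{s_i}$ = $p$ with $x_i,x_{i+1}$ exchanged: $(p\otimes u)\mathbf T_i=(1-s)\frac{x_{i+1}(p-p^{s_i})}{x_i-x_{i+1}}\otimes u+p^{s_i}\otimes uT_i$, $(p\otimes u)\mathbf w=p(qx_N,x_1,\dots,x_{N-1})\otimes uT_1\cdots T_{N-1}$, $\mathbf T_i^{-1}=s^{-1}(\mathbf T_i+1-s)$, $\Xi_j=s^{j-N}\mathbf T_{j-1}^{-1}\cdots\mathbf T_1^{-1}\mathbf w\mathbf T_{N-1}\cdots\mathbf T_j$. Orders: $v^+$ is the decreasing rearrangement of $v$; $v\preceq v'$ iff $\sum_{k\le i}v_k\le\sum_{k\le i}v'_k$ for all $i$; $v\trianglelefteq v'$ iff either $v^+\ne v'^+$ and $v^+\preceq v'^+$, or $v^+=v'^+$ and $v\preceq v'$; $v'\lhd v$ means $v'\trianglelefteq v$ and $v'\neq v$. *)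

theory Defs
  imports "HOL-Library.Poly_Mapping" "HOL-Computational_Algebra.Polynomial"
          "HOL-Computational_Algebra.Fraction_Field"
begin

section \<open>The base field K = C(q,s)\<close>

type_synonym K = "complex poly poly fract"

definition s_par :: K where
  "s_par = Fract [:[:0, 1:]:] 1"     \<comment> \<open>inner indeterminate s\<close>

definition q_par :: K where
  "q_par = Fract [:0, 1:] 1"         \<comment> \<open>outer indeterminate q\<close>

text \<open>Monomials: finitely supported exponent maps; variable x_k (k = 1..N) has key k-1.\<close>
type_synonym mpoly = "(nat \<Rightarrow>\<^sub>0 nat) \<Rightarrow>\<^sub>0 K"

definition const :: "K \<Rightarrow> mpoly" where
  "const c = Poly_Mapping.single 0 c"

definition Xv :: "nat \<Rightarrow> mpoly" where
  "Xv k = Poly_Mapping.single (Poly_Mapping.single (k - 1) 1) 1"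

definition mono :: "nat list \<Rightarrow> (nat \<Rightarrow>\<^sub>0 nat)" where
  "mono v = Poly_Mapping.nth v"

definition psubst :: "(nat \<Rightarrow> mpoly) \<Rightarrow> mpoly \<Rightarrow> mpoly" where
  "psubst \<sigma> p = (\<Sum>m\<in>Poly_Mapping.keys p. const (Poly_Mapping.lookup p m) *
                      (\<Prod>k\<in>Poly_Mapping.keys m. \<sigma> (k + 1) ^ Poly_Mapping.lookup m k))"

definition swapvars :: "nat \<Rightarrow> mpoly \<Rightarrow> mpoly" where
  "swapvars i p = psubst (\<lambda>k. if k = i then Xv (i + 1) else if k = i + 1 then Xv i else Xv k) p"

definition wsubst :: "nat \<Rightarrow> mpoly \<Rightarrow> mpoly" where
  "wsubst N p = psubst (\<lambda>k. if k = 1 then const q_par * Xv N else Xv (k - 1)) p"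

text \<open>x_{i+1}(p - p^{s_i})/(x_i - x_{i+1}) (an exact polynomial division).\<close>
definition ddiff :: "nat \<Rightarrow> mpoly \<Rightarrow> mpoly" where
  "ddiff i p = (THE r. r * (Xv i - Xv (i + 1)) = Xv (i + 1) * (p - swapvars i p))"

section \<open>Partitions and reverse standard tableaux (French convention)\<close>

text \<open>A partition of N: weakly decreasing list of positive parts summing to N;
  lam ! r is the length of row r (rows numbered bottom to top from 0).\<close>
definition is_partition :: "nat list \<Rightarrow> nat \<Rightarrow> bool" where
  "is_partition lam N \<longleftrightarrow> sorted (rev lam) \<and> (\<forall>x\<in>set lam. 0 < x) \<and> sum_list lam = N"

definition cells :: "nat list \<Rightarrow> (nat \<times> nat) set" where
  "cells lam = {(r, c). r < length lam \<and> c < lam ! r}"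

text \<open>A tableau is the list whose (i-1)-th entry is the cell (row, column) containing i.\<close>
type_synonym tab = "(nat \<times> nat) list"

definition Tab :: "nat list \<Rightarrow> nat \<Rightarrow> tab set" where
  "Tab lam N = {L. length L = N \<and> distinct L \<and> set L = cells lam \<and>
     (\<forall>a<N. \<forall>b<N. \<forall>r c. L ! a = (r, c) \<and> L ! b = (r, Suc c) \<longrightarrow> b < a) \<and>
     (\<forall>a<N. \<forall>b<N. \<forall>r c. L ! a = (r, c) \<and> L ! b = (Suc r, c) \<longrightarrow> b < a)}"

definition cell_of :: "tab \<Rightarrow> nat \<Rightarrow> nat \<times> nat" where
  "cell_of L i = L ! (i - 1)"

definition CT :: "tab \<Rightarrow> nat \<Rightarrow> int" where
  "CT L i = int (snd (cell_of L i)) - int (fst (cell_of L i))"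

definition tswap :: "tab \<Rightarrow> nat \<Rightarrow> tab" where
  "tswap L i = L[i - 1 := L ! i, i := L ! (i - 1)]"

type_synonym vec = "tab \<Rightarrow> K"

definition basis :: "tab \<Rightarrow> vec" where
  "basis T = (\<lambda>U. if U = T then 1 else 0)"

text \<open>Coefficient of U in T T_i.  The last case (i in a lower row than i+1) is the one
  forced by the formula for T^{(i,i+1)} T_i together with (T_i+1)(T_i-s)=0.\<close>
definition coefT :: "nat \<Rightarrow> tab \<Rightarrow> tab \<Rightarrow> K" where
  "coefT i T U =
    (let a = cell_of T i; b = cell_of T (i + 1) in
     if fst a = fst b then (if U = T then s_par else 0)
     else if snd a = snd b then (if U = T then -1 else 0)
     else if fst b < fst a then
       (let m = nat (CT T (i + 1) - CT T i) in
          (if U = T then (s_par - 1) / (1 - s_par ^ m) else 0)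
        + (if U = tswap T i then
             s_par * (1 - s_par ^ (m + 1)) * (1 - s_par ^ (m - 1)) / (1 - s_par ^ m)^2
           else 0))
     else
       (let m = nat (CT T i - CT T (i + 1)) in
          (if U = T then s_par - 1 - (s_par - 1) / (1 - s_par ^ m) else 0)
        + (if U = tswap T i then 1 else 0)))"

definition vecT :: "nat list \<Rightarrow> nat \<Rightarrow> nat \<Rightarrow> vec \<Rightarrow> vec" where
  "vecT lam N i u = (\<lambda>U. \<Sum>T\<in>Tab lam N. u T * coefT i T U)"

text \<open>Action of a word T_{w_1} T_{w_2} ... T_{w_k} (applied left to right).\<close>
definition vec_word :: "nat list \<Rightarrow> nat \<Rightarrow> nat list \<Rightarrow> vec \<Rightarrow> vec" where
  "vec_word lam N w u = fold (vecT lam N) w u"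

text \<open>Elements of the Hecke algebra H_N(s), represented (via the surjection from the free
  algebra on T_1..T_{N-1}) as finite K-linear combinations of words in the generators.\<close>
type_synonym hecke = "nat list \<Rightarrow>\<^sub>0 K"

definition is_hecke :: "nat \<Rightarrow> hecke \<Rightarrow> bool" where
  "is_hecke N h \<longleftrightarrow> (\<forall>w\<in>Poly_Mapping.keys h. set w \<subseteq> {1..<N})"

definition hact :: "nat list \<Rightarrow> nat \<Rightarrow> vec \<Rightarrow> hecke \<Rightarrow> vec" where
  "hact lam N u h = (\<lambda>U. \<Sum>w\<in>Poly_Mapping.keys h. Poly_Mapping.lookup h w * vec_word lam N w u U)"

text \<open>An element is written \<Sum>_T p_T \<otimes> T, stored as T \<mapsto> p_T.\<close>
type_synonym modl = "tab \<Rightarrow> mpoly"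

definition tensor :: "nat list \<Rightarrow> vec \<Rightarrow> modl" where
  "tensor v u = (\<lambda>U. Poly_Mapping.single (mono v) (u U))"

definition mlin :: "nat list \<Rightarrow> nat \<Rightarrow> (mpoly \<Rightarrow> mpoly) \<Rightarrow> (vec \<Rightarrow> vec) \<Rightarrow> modl \<Rightarrow> modl" where
  "mlin lam N \<phi> g f = (\<lambda>U. \<Sum>T\<in>Tab lam N. \<phi> (f T) * const (g (basis T) U))"

definition opT :: "nat list \<Rightarrow> nat \<Rightarrow> nat \<Rightarrow> modl \<Rightarrow> modl" where
  "opT lam N i f = (\<lambda>U. const (1 - s_par) * ddiff i (f U)
                        + mlin lam N (swapvars i) (vecT lam N i) f U)"

definition opTinv :: "nat list \<Rightarrow> nat \<Rightarrow> nat \<Rightarrow> modl \<Rightarrow> modl" where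
  "opTinv lam N i f = (\<lambda>U. const (inverse s_par) * (opT lam N i f U + const (1 - s_par) * f U))"

definition opW :: "nat list \<Rightarrow> nat \<Rightarrow> modl \<Rightarrow> modl" where
  "opW lam N f = mlin lam N (wsubst N) (vec_word lam N [1..<N]) f"

text \<open>\<Xi>_j = s^{j-N} T_{j-1}^{-1} ... T_1^{-1} w T_{N-1} ... T_j, operators applied left to right.\<close>
definition Xi :: "nat list \<Rightarrow> nat \<Rightarrow> nat \<Rightarrow> modl \<Rightarrow> modl" where
  "Xi lam N j f =
     (let f1 = fold (opTinv lam N) (rev [1..<j]) f;
          f2 = opW lam N f1;
          f3 = fold (opT lam N) (rev [j..<N]) f2
      in (\<lambda>U. const (inverse (s_par ^ (N - j))) * f3 U))"

definition dom_le :: "nat list \<Rightarrow> nat list \<Rightarrow> bool" where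
  "dom_le v v' \<longleftrightarrow> (\<forall>i\<le>length v. sum_list (take i v) \<le> sum_list (take i v'))"

definition dec_rearr :: "nat list \<Rightarrow> nat list" where
  "dec_rearr v = rev (sort v)"

definition tri_le :: "nat list \<Rightarrow> nat list \<Rightarrow> bool" where
  "tri_le v v' \<longleftrightarrow>
     (dec_rearr v \<noteq> dec_rearr v' \<and> dom_le (dec_rearr v) (dec_rearr v'))
     \<or> (dec_rearr v = dec_rearr v' \<and> dom_le v v')"

definition tri_lt :: "nat list \<Rightarrow> nat list \<Rightarrow> bool" where
  "tri_lt v' v \<longleftrightarrow> tri_le v' v \<and> v' \<noteq> v"

end

theory Submission
  imports Defs "HOL-Combinatorics.Permutations"
begin

text \<open>
  On \<open>x^u \<otimes> a\<close>, \<open>w\<close> gives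
  \<open>x^(rotate1 u) \<otimes> q^u\<^sub>1 a T\<^sub>1\<cdots>T\<^sub>N\<^sub>-\<^sub>1\<close>, and \<open>T\<^sub>i\<close> gives \<open>x^(s\<^sub>i u) \<otimes> a T\<^sub>i\<close> plus the
  divided-difference part, a sum of scalar multiples of \<open>x^u' \<otimes> a\<close> where \<open>u'\<close> replaces the
  pair \<open>(u\<^sub>i, u\<^sub>i\<^sub>+\<^sub>1)\<close> by a pair with the same sum lying between them. So \<open>u'\<close> is \<open>u\<close>, or
  \<open>s\<^sub>i u\<close>, or its decreasing rearrangement is strictly below that of \<open>u\<close> in dominance order.
  Hence all coefficients in \<open>V\<^sub>\<lambda>\<close> stay in the cyclic module \<open>T H\<^sub>N(s)\<close>, and only the
  exponents that remain rearrangements of \<open>v\<close> need to be tracked: the factors \<open>T\<^sub>i\<^sup>-\<^sup>1\<close>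
  carry the entry \<open>v\<^sub>j\<close> to the front, \<open>w\<close> moves it to the end, and the factors \<open>T\<^sub>i\<close>
  carry it back to position \<open>j\<close>; comparing the entries it passes with those of \<open>v\<close> shows
  that the surviving exponents are dominated by \<open>v\<close>.
\<close>

section \<open>Monomial substitutions and divided differences\<close>

lemma const_add: "const (a + b) = const a + const b"
  by (simp add: const_def single_add)

lemma const_mult: "const (a * b) = const a * const b"
  by (simp add: const_def mult_single)

lemma const_0 [simp]: "const 0 = 0"
  by (simp add: const_def)

lemma const_mult_single: "const c * Poly_Mapping.single m d = Poly_Mapping.single m (c * d)"
  by (simp add: const_def mult_single)

lemma single_sum: "(\<Sum>x\<in>A. Poly_Mapping.single m (f x)) = Poly_Mapping.single m (\<Sum>x\<in>A. f x)"
  by (induction A rule: infinite_finite_induct) (auto simp: single_add)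

definition subst_monom :: "(nat \<Rightarrow> mpoly) \<Rightarrow> (nat \<Rightarrow>\<^sub>0 nat) \<Rightarrow> mpoly" where
  "subst_monom \<sigma> m = (\<Prod>k\<in>Poly_Mapping.keys m. \<sigma> (k + 1) ^ Poly_Mapping.lookup m k)"

lemma psubst_eq_sum_superset:
  assumes "finite A" "Poly_Mapping.keys p \<subseteq> A"
  shows "psubst \<sigma> p = (\<Sum>m\<in>A. const (Poly_Mapping.lookup p m) * subst_monom \<sigma> m)"
  unfolding psubst_def subst_monom_def
  by (rule sum.mono_neutral_left) (use assms in \<open>auto simp: in_keys_iff\<close>)

lemma psubst_add: "psubst \<sigma> (p + q) = psubst \<sigma> p + psubst \<sigma> q"
proof -
  let ?A = "Poly_Mapping.keys p \<union> Poly_Mapping.keys q"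
  have "psubst \<sigma> (p + q) = (\<Sum>m\<in>?A. const (Poly_Mapping.lookup (p + q) m) * subst_monom \<sigma> m)"
    by (rule psubst_eq_sum_superset) (simp_all add: keys_add)
  also have "\<dots> = psubst \<sigma> p + psubst \<sigma> q"
    by (simp add: psubst_eq_sum_superset[of ?A] lookup_add const_add distrib_right sum.distrib)
  finally show ?thesis .
qed

lemma psubst_0 [simp]: "psubst \<sigma> 0 = 0"
  by (simp add: psubst_def)

lemma psubst_single: "psubst \<sigma> (Poly_Mapping.single m c) = const c * subst_monom \<sigma> m"
  by (subst psubst_eq_sum_superset[where A = "{m}"]) auto

lemma single_single_power:
  "Poly_Mapping.single (Poly_Mapping.single t (1::nat)) (g::K) ^ n
     = Poly_Mapping.single (Poly_Mapping.single t n) (g ^ n)"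
  by (induction n) (simp_all add: mult_single single_add[symmetric])

lemma prod_single:
  "(\<Prod>k\<in>A. Poly_Mapping.single (e k) (c k) :: mpoly)
     = Poly_Mapping.single (\<Sum>k\<in>A. e k) (\<Prod>k\<in>A. c k)"
  by (induction A rule: infinite_finite_induct) (auto simp: mult_single)

lemma subst_monom_scaled_variables:
  assumes "\<And>k. \<sigma> (k + 1) = Poly_Mapping.single (Poly_Mapping.single (\<tau> k) 1) (\<gamma> k)"
  shows "subst_monom \<sigma> m = Poly_Mapping.single
            (\<Sum>k\<in>Poly_Mapping.keys m. Poly_Mapping.single (\<tau> k) (Poly_Mapping.lookup m k))
            (\<Prod>k\<in>Poly_Mapping.keys m. \<gamma> k ^ Poly_Mapping.lookup m k)"
  unfolding subst_monom_def assms single_single_power prod_single ..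

lemma lookup_sum_single_relabel:
  assumes "finite A" "Poly_Mapping.keys m \<subseteq> A" "\<And>k. k \<in> A \<Longrightarrow> \<tau> k = t \<longleftrightarrow> k = r"
  shows "Poly_Mapping.lookup (\<Sum>k\<in>Poly_Mapping.keys m. Poly_Mapping.single (\<tau> k) (Poly_Mapping.lookup m k)) t
     = (if r \<in> A then Poly_Mapping.lookup m r else 0)"
proof -
  have "Poly_Mapping.lookup (\<Sum>k\<in>Poly_Mapping.keys m. Poly_Mapping.single (\<tau> k) (Poly_Mapping.lookup m k)) t
      = (\<Sum>k\<in>A. (Poly_Mapping.lookup m k when \<tau> k = t))"
    unfolding lookup_sum lookup_single
    by (rule sum.mono_neutral_left) (use assms in \<open>auto simp: in_keys_iff\<close>)
  also have "\<dots> = (\<Sum>k\<in>A. if k = r then Poly_Mapping.lookup m k else 0)"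
    by (rule sum.cong) (auto simp: assms(3) when_def)
  finally show ?thesis
    using assms(1) by simp
qed

lemma lookup_mono: "Poly_Mapping.lookup (mono u) k = nth_default 0 u k"
  by (simp add: mono_def)

lemma keys_mono_subset: "Poly_Mapping.keys (mono u) \<subseteq> {..<length u}"
  by (auto simp: in_keys_iff lookup_mono nth_default_def split: if_splits)

definition swap_adj :: "nat \<Rightarrow> nat list \<Rightarrow> nat list" where
  "swap_adj p u = u[p := u ! Suc p, Suc p := u ! p]"

lemma length_swap_adj [simp]: "length (swap_adj p u) = length u"
  by (simp add: swap_adj_def)

lemma mset_swap_adj: "Suc p < length u \<Longrightarrow> mset (swap_adj p u) = mset u"
  unfolding swap_adj_def by (rule mset_swap) auto

lemma mset_rotate1: "mset (rotate1 u) = mset u"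
  by (cases u) auto

text \<open>The variable \<open>x\<^sub>i\<close> is the key \<open>i - 1\<close> of a monomial, so \<open>swapvars (Suc p)\<close>
  exchanges the exponents at positions \<open>p\<close> and \<open>Suc p\<close>.\<close>

lemma swapvars_single:
  assumes "Suc p < length u"
  shows "swapvars (Suc p) (Poly_Mapping.single (mono u) c) = Poly_Mapping.single (mono (swap_adj p u)) c"
proof -
  define \<tau> where "\<tau> k = (if k = p then Suc p else if k = Suc p then p else k)" for k
  have \<sigma>: "(if k + 1 = Suc p then Xv (Suc p + 1) else if k + 1 = Suc p + 1 then Xv (Suc p) else Xv (k + 1))
          = Poly_Mapping.single (Poly_Mapping.single (\<tau> k) 1) 1" for k
    by (auto simp: Xv_def \<tau>_def)
  have exps: "(\<Sum>k\<in>Poly_Mapping.keys (mono u). Poly_Mapping.single (\<tau> k) (Poly_Mapping.lookup (mono u) k))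
        = mono (swap_adj p u)"
  proof (rule poly_mapping_eqI)
    fix t
    have "Poly_Mapping.lookup (\<Sum>k\<in>Poly_Mapping.keys (mono u). Poly_Mapping.single (\<tau> k) (Poly_Mapping.lookup (mono u) k)) t
       = (if \<tau> t \<in> {..<length u} then Poly_Mapping.lookup (mono u) (\<tau> t) else 0)"
      by (rule lookup_sum_single_relabel) (use keys_mono_subset assms in \<open>auto simp: \<tau>_def\<close>)
    then show "Poly_Mapping.lookup (\<Sum>k\<in>Poly_Mapping.keys (mono u). Poly_Mapping.single (\<tau> k) (Poly_Mapping.lookup (mono u) k)) t
       = Poly_Mapping.lookup (mono (swap_adj p u)) t"
      using assms by (auto simp: lookup_mono nth_default_def \<tau>_def swap_adj_def nth_list_update)
  qed
  show ?thesis
    unfolding swapvars_def psubst_single subst_monom_scaled_variables[where \<tau> = \<tau> and \<gamma> = "\<lambda>_. 1", OF \<sigma>] exps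
    by (simp add: const_mult_single)
qed

lemma wsubst_single:
  assumes "length u = N" "u \<noteq> []"
  shows "wsubst N (Poly_Mapping.single (mono u) c)
           = Poly_Mapping.single (mono (rotate1 u)) (c * q_par ^ hd u)"
proof -
  define \<tau> where "\<tau> k = (if k = 0 then N - 1 else k - 1)" for k
  define \<gamma> :: "nat \<Rightarrow> K" where "\<gamma> k = (if k = 0 then q_par else 1)" for k
  have \<sigma>: "(if k + 1 = 1 then const q_par * Xv N else Xv (k + 1 - 1))
          = Poly_Mapping.single (Poly_Mapping.single (\<tau> k) 1) (\<gamma> k)" for k
    by (auto simp: Xv_def \<tau>_def \<gamma>_def const_mult_single)
  have exps: "(\<Sum>k\<in>Poly_Mapping.keys (mono u). Poly_Mapping.single (\<tau> k) (Poly_Mapping.lookup (mono u) k))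
        = mono (rotate1 u)"
  proof (rule poly_mapping_eqI)
    fix t
    define r where "r = (if t < N then Suc t mod N else N)"
    have "Poly_Mapping.lookup (\<Sum>k\<in>Poly_Mapping.keys (mono u). Poly_Mapping.single (\<tau> k) (Poly_Mapping.lookup (mono u) k)) t
       = (if r \<in> {..<length u} then Poly_Mapping.lookup (mono u) r else 0)"
      by (rule lookup_sum_single_relabel)
         (use keys_mono_subset assms in \<open>auto simp: \<tau>_def r_def mod_Suc\<close>)
    then show "Poly_Mapping.lookup (\<Sum>k\<in>Poly_Mapping.keys (mono u). Poly_Mapping.single (\<tau> k) (Poly_Mapping.lookup (mono u) k)) t
       = Poly_Mapping.lookup (mono (rotate1 u)) t"
      using assms by (auto simp: lookup_mono nth_default_def r_def nth_rotate1)
  qed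
  have "(\<Prod>k\<in>Poly_Mapping.keys (mono u). \<gamma> k ^ Poly_Mapping.lookup (mono u) k)
      = (\<Prod>k\<in>{..<N}. \<gamma> k ^ Poly_Mapping.lookup (mono u) k)"
    by (rule prod.mono_neutral_left) (use keys_mono_subset assms in \<open>auto simp: in_keys_iff\<close>)
  also have "\<dots> = (\<Prod>k\<in>{..<N}. if k = 0 then q_par ^ Poly_Mapping.lookup (mono u) 0 else 1)"
    by (rule prod.cong) (auto simp: \<gamma>_def)
  also have "\<dots> = q_par ^ hd u"
    using assms by (auto simp: lookup_mono nth_default_def hd_conv_nth)
  finally have coeff: "(\<Prod>k\<in>Poly_Mapping.keys (mono u). \<gamma> k ^ Poly_Mapping.lookup (mono u) k) = q_par ^ hd u" .
  show ?thesis
    unfolding wsubst_def psubst_single subst_monom_scaled_variables[where \<tau> = \<tau> and \<gamma> = \<gamma>, OF \<sigma>] exps coeff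
    by (simp add: const_mult_single)
qed

definition xpow :: "nat list \<Rightarrow> mpoly" where
  "xpow u = Poly_Mapping.single (mono u) 1"

lemma single_mono_eq_const_xpow: "Poly_Mapping.single (mono u) c = const c * xpow u"
  by (simp add: xpow_def const_mult_single)

lemma xpow_mult_Xv:
  assumes "p < length u"
  shows "xpow u * Xv (Suc p) = xpow (u[p := Suc (u ! p)])"
proof -
  have "mono u + Poly_Mapping.single p 1 = mono (u[p := Suc (u ! p)])"
    by (rule poly_mapping_eqI)
       (use assms in \<open>auto simp: lookup_add lookup_mono lookup_single nth_default_def nth_list_update when_def\<close>)
  then show ?thesis
    by (simp add: xpow_def Xv_def mult_single)
qed

text \<open>Multiplied by \<open>x\<^sub>p\<^sub>+\<^sub>1 - x\<^sub>p\<^sub>+\<^sub>2\<close>, the sum of the monomials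
  \<open>x^(redistribute u p x)\<close> over \<open>redistribute_range u p\<close> telescopes; this computes the
  divided difference of \<open>x^u\<close>.\<close>

definition redistribute :: "nat list \<Rightarrow> nat \<Rightarrow> nat \<Rightarrow> nat list" where
  "redistribute u p x = u[p := x, Suc p := u ! p + u ! Suc p - x]"

definition redistribute_range :: "nat list \<Rightarrow> nat \<Rightarrow> nat set" where
  "redistribute_range u p =
     (if u ! Suc p < u ! p then {u ! Suc p..<u ! p} else {u ! p..<u ! Suc p})"

definition redistribute_sign :: "nat list \<Rightarrow> nat \<Rightarrow> K" where
  "redistribute_sign u p = (if u ! Suc p < u ! p then 1 else -1)"

lemma length_redistribute [simp]: "length (redistribute u p x) = length u"
  by (simp add: redistribute_def)

lemma divided_difference_xpow:
  assumes "Suc p < length u"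
  shows "const (redistribute_sign u p) * (\<Sum>x\<in>redistribute_range u p. xpow (redistribute u p x))
           * (Xv (Suc p) - Xv (Suc (Suc p)))
         = Xv (Suc (Suc p)) * (xpow u - swapvars (Suc p) (xpow u))"
proof -
  define a where "a = u ! p"
  define b where "b = u ! Suc p"
  define g where "g x = xpow (u[p := x, Suc p := a + b + 1 - x])" for x
  have step: "xpow (redistribute u p x) * (Xv (Suc p) - Xv (Suc (Suc p))) = g (Suc x) - g x"
    if "x \<le> a + b" for x
    using assms that
    by (simp add: right_diff_distrib xpow_mult_Xv redistribute_def g_def a_def b_def
        nth_list_update list_update_swap Suc_diff_le)
  have telescope: "(\<Sum>x\<in>{m..<n}. xpow (redistribute u p x)) * (Xv (Suc p) - Xv (Suc (Suc p)))
                     = g n - g m"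
    if "m \<le> n" "n \<le> a + b" for m n
  proof -
    have "(\<Sum>x\<in>{m..<n}. xpow (redistribute u p x)) * (Xv (Suc p) - Xv (Suc (Suc p)))
        = (\<Sum>x\<in>{m..<n}. g (Suc x) - g x)"
      unfolding sum_distrib_right by (rule sum.cong) (use that step in auto)
    also have "\<dots> = g n - g m"
      by (rule sum_Suc_diff'[OF that(1)])
    finally show ?thesis .
  qed
  have "g a = Xv (Suc (Suc p)) * xpow u"
    using assms by (simp add: xpow_mult_Xv g_def a_def b_def mult.commute)
  moreover have "g b = Xv (Suc (Suc p)) * swapvars (Suc p) (xpow u)"
    using assms xpow_mult_Xv[of "Suc p" "swap_adj p u"]
    by (simp add: xpow_def swapvars_single g_def a_def b_def mult.commute swap_adj_def nth_list_update)
  ultimately have "Xv (Suc (Suc p)) * (xpow u - swapvars (Suc p) (xpow u)) = g a - g b"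
    by (simp add: right_diff_distrib)
  then show ?thesis
    using telescope[of b a] telescope[of a b]
    by (cases "b < a") (simp_all add: redistribute_sign_def redistribute_range_def
        const_def single_uminus flip: a_def b_def)
qed

lemma swapvars_add: "swapvars i (f + g) = swapvars i f + swapvars i g"
  by (simp add: swapvars_def psubst_add)

lemma Xv_diff_nonzero: "Xv (Suc p) - Xv (Suc (Suc p)) \<noteq> 0"
proof
  assume "Xv (Suc p) - Xv (Suc (Suc p)) = 0"
  then have "Poly_Mapping.lookup (Xv (Suc p)) (Poly_Mapping.single p 1)
           = Poly_Mapping.lookup (Xv (Suc (Suc p))) (Poly_Mapping.single p 1)"
    by simp
  moreover have "Poly_Mapping.single p (1::nat) \<noteq> Poly_Mapping.single (Suc p) 1"
    by (metis lookup_single_eq lookup_single_not_eq n_not_Suc_n one_neq_zero)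
  ultimately show False
    by (simp add: Xv_def lookup_single)
qed

lemma ddiff_eqI:
  assumes "r * (Xv (Suc p) - Xv (Suc (Suc p))) = Xv (Suc (Suc p)) * (f - swapvars (Suc p) f)"
  shows "ddiff (Suc p) f = r"
  unfolding ddiff_def Suc_eq_plus1[symmetric]
proof (rule the_equality)
  show "r * (Xv (Suc p) - Xv (Suc (Suc p))) = Xv (Suc (Suc p)) * (f - swapvars (Suc p) f)"
    by (fact assms)
  fix r' assume "r' * (Xv (Suc p) - Xv (Suc (Suc p))) = Xv (Suc (Suc p)) * (f - swapvars (Suc p) f)"
  with assms Xv_diff_nonzero show "r' = r"
    by (metis mult_right_cancel)
qed

lemma divided_difference_single:
  assumes "Suc p < length u"
  shows "const (c * redistribute_sign u p) * (\<Sum>x\<in>redistribute_range u p. xpow (redistribute u p x))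
           * (Xv (Suc p) - Xv (Suc (Suc p)))
         = Xv (Suc (Suc p)) * (Poly_Mapping.single (mono u) c - swapvars (Suc p) (Poly_Mapping.single (mono u) c))"
proof -
  have "swapvars (Suc p) (Poly_Mapping.single (mono u) c) = const c * swapvars (Suc p) (xpow u)"
    using assms by (simp add: swapvars_single xpow_def const_mult_single)
  then show ?thesis
    using arg_cong[OF divided_difference_xpow[OF assms], of "(*) (const c)"]
    by (simp add: single_mono_eq_const_xpow const_mult algebra_simps)
qed

lemma ddiff_single:
  "Suc p < length u \<Longrightarrow> ddiff (Suc p) (Poly_Mapping.single (mono u) c)
     = const (c * redistribute_sign u p) * (\<Sum>x\<in>redistribute_range u p. xpow (redistribute u p x))"
  by (rule ddiff_eqI[OF divided_difference_single])

lemma ex_mono_eq: "\<exists>u. mono u = m \<and> n < length u"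
proof -
  define L where "L = Suc (n + Max (insert 0 (Poly_Mapping.keys m)))"
  define u where "u = map (Poly_Mapping.lookup m) [0..<L]"
  have "mono u = m"
  proof (rule poly_mapping_eqI)
    fix k
    have "k \<notin> Poly_Mapping.keys m" if "length u \<le> k"
    proof
      assume "k \<in> Poly_Mapping.keys m"
      then have "k \<le> Max (insert 0 (Poly_Mapping.keys m))"
        by simp
      with that show False
        by (simp add: u_def L_def)
    qed
    then show "Poly_Mapping.lookup (mono u) k = Poly_Mapping.lookup m k"
      by (cases "k < length u") (auto simp: lookup_mono nth_default_def u_def in_keys_iff)
  qed
  then show ?thesis
    by (intro exI[of _ u]) (simp add: u_def L_def)
qed

lemma poly_expand: "f = (\<Sum>m\<in>Poly_Mapping.keys f. Poly_Mapping.single m (Poly_Mapping.lookup f m))"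
  by (rule poly_mapping_eqI) (simp add: lookup_sum lookup_single when_def in_keys_iff)

text \<open>\<open>ddiff\<close> is defined by \<open>THE\<close>, so its additivity needs exact divisibility for every
  polynomial, not only for monomials.\<close>

lemma ddiff_exists: "\<exists>r. r * (Xv (Suc p) - Xv (Suc (Suc p))) = Xv (Suc (Suc p)) * (f - swapvars (Suc p) f)"
proof -
  let ?divisible = "\<lambda>f. \<exists>r. r * (Xv (Suc p) - Xv (Suc (Suc p))) = Xv (Suc (Suc p)) * (f - swapvars (Suc p) f)"
  have single: "?divisible (Poly_Mapping.single m c)" for m c
  proof -
    obtain u where "mono u = m" "Suc p < length u"
      using ex_mono_eq by blast
    then show ?thesis
      using divided_difference_single by blast
  qed
  have sum: "?divisible (sum g A)" if terms: "\<And>a. ?divisible (g a)" for g :: "_ \<Rightarrow> mpoly" and A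
  proof (induction A rule: infinite_finite_induct)
    case (insert a A)
    obtain r1 r2 where
      "r1 * (Xv (Suc p) - Xv (Suc (Suc p))) = Xv (Suc (Suc p)) * (g a - swapvars (Suc p) (g a))"
      "r2 * (Xv (Suc p) - Xv (Suc (Suc p))) = Xv (Suc (Suc p)) * (sum g A - swapvars (Suc p) (sum g A))"
      using terms insert.IH by blast
    then have "(r1 + r2) * (Xv (Suc p) - Xv (Suc (Suc p)))
        = Xv (Suc (Suc p)) * (g a + sum g A - swapvars (Suc p) (g a + sum g A))"
      by (simp add: distrib_right swapvars_add algebra_simps)
    then show ?case
      using insert.hyps by auto
  qed (simp_all add: swapvars_def)
  show ?thesis
    by (subst (1 2) poly_expand) (rule sum, rule single)
qed

lemma ddiff_add: "ddiff (Suc p) (f + g) = ddiff (Suc p) f + ddiff (Suc p) g"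
proof -
  obtain r1 r2 where
    "r1 * (Xv (Suc p) - Xv (Suc (Suc p))) = Xv (Suc (Suc p)) * (f - swapvars (Suc p) f)"
    "r2 * (Xv (Suc p) - Xv (Suc (Suc p))) = Xv (Suc (Suc p)) * (g - swapvars (Suc p) g)"
    using ddiff_exists by blast
  moreover from this have
    "(r1 + r2) * (Xv (Suc p) - Xv (Suc (Suc p))) = Xv (Suc (Suc p)) * (f + g - swapvars (Suc p) (f + g))"
    by (simp add: distrib_right swapvars_add algebra_simps)
  ultimately show ?thesis
    by (simp add: ddiff_eqI)
qed

lemma ddiff_0 [simp]: "ddiff (Suc p) 0 = 0"
  by (rule ddiff_eqI) (simp add: swapvars_def)

section \<open>Dominance of decreasing rearrangements\<close>

lemma sum_list_take_eq_sum_nth: "k \<le> length xs \<Longrightarrow> sum_list (take k xs) = (\<Sum>i<k. xs ! i)"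
  by (simp add: sum_list_sum_nth atLeast0LessThan min_def)

lemma length_dec_rearr [simp]: "length (dec_rearr u) = length u"
  by (simp add: dec_rearr_def)

lemma mset_dec_rearr [simp]: "mset (dec_rearr u) = mset u"
  by (simp add: dec_rearr_def)

lemma dec_rearr_eq_iff: "dec_rearr u = dec_rearr w \<longleftrightarrow> mset u = mset w"
  by (metis dec_rearr_def mset_dec_rearr properties_for_sort sorted_sort mset_sort)

lemma dec_rearr_antimono:
  assumes "i \<le> k" "k < length u"
  shows "dec_rearr u ! k \<le> dec_rearr u ! i"
proof -
  have "sort u ! (length u - Suc k) \<le> sort u ! (length u - Suc i)"
    by (rule sorted_nth_mono) (use assms in auto)
  then show ?thesis
    using assms by (simp add: dec_rearr_def rev_nth)
qed

lemma dom_le_trans: "dom_le a b \<Longrightarrow> dom_le b c \<Longrightarrow> length a = length b \<Longrightarrow> dom_le a c"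
  unfolding dom_le_def by (metis order_trans)

lemma dom_le_antisym:
  assumes "dom_le a b" "dom_le b a" "length a = length b"
  shows "a = b"
proof (rule nth_equalityI)
  fix k assume k: "k < length a"
  have prefix: "sum_list (take i a) = sum_list (take i b)" if "i \<le> length a" for i
    using assms that unfolding dom_le_def by (metis antisym)
  show "a ! k = b ! k"
    using prefix[of k] prefix[of "Suc k"] k assms(3) by (simp add: take_Suc_conv_app_nth)
qed (fact assms)

text \<open>The dominance order on decreasing rearrangements is read off from the sums over
  \<open>k\<close>-element sets of positions: the largest such sum is the sum of the first \<open>k\<close>
  entries of \<open>dec_rearr\<close>.\<close>

lemma sum_le_sum_of_card_eq:
  fixes f :: "nat \<Rightarrow> nat"
  assumes "finite A" "finite B" "card A = card B" "\<And>x y. x \<in> A \<Longrightarrow> y \<in> B \<Longrightarrow> f x \<le> f y"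
  shows "sum f A \<le> sum f B"
proof -
  obtain h where h: "bij_betw h A B"
    using finite_same_card_bij[OF assms(1-3)] by blast
  have "sum f A \<le> sum (f \<circ> h) A"
    by (rule sum_mono) (use h assms(4) in \<open>auto simp: bij_betw_def\<close>)
  also have "\<dots> = sum f B"
    using sum.reindex_bij_betw[OF h] by simp
  finally show ?thesis .
qed

lemma sum_subset_le_sum_prefix:
  fixes d :: "nat list"
  assumes antimono: "\<And>i k. i \<le> k \<Longrightarrow> k < length d \<Longrightarrow> d ! k \<le> d ! i"
    and J: "J \<subseteq> {..<length d}" "card J = k"
  shows "(\<Sum>i\<in>J. d ! i) \<le> (\<Sum>i<k. d ! i)"
proof -
  have fin: "finite J"
    using J finite_subset by blast
  have "card (J - {..<k}) = card ({..<k} - J)"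
    using J fin by (simp add: card_Diff_subset_Int Int_commute)
  then have "(\<Sum>i\<in>J - {..<k}. d ! i) \<le> (\<Sum>i\<in>{..<k} - J. d ! i)"
    by (intro sum_le_sum_of_card_eq antimono) (use fin J(1) in auto)
  then have "(\<Sum>i\<in>J - {..<k}. d ! i) + (\<Sum>i\<in>J \<inter> {..<k}. d ! i)
      \<le> (\<Sum>i\<in>{..<k} - J. d ! i) + (\<Sum>i\<in>{..<k} \<inter> J. d ! i)"
    by (simp add: Int_commute)
  then show ?thesis
    by (metis fin finite_lessThan sum.Int_Diff add.commute)
qed

lemma sum_subset_le_sum_take_dec_rearr:
  assumes "I \<subseteq> {..<length u}" "card I = k"
  shows "(\<Sum>i\<in>I. u ! i) \<le> sum_list (take k (dec_rearr u))"
proof -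
  obtain \<pi> where \<pi>: "\<pi> permutes {..<length u}" "permute_list \<pi> u = dec_rearr u"
    using mset_eq_permutation[of "dec_rearr u" u] by auto
  have nth_dec: "dec_rearr u ! m = u ! \<pi> m" if "m < length u" for m
    using \<pi> that by (metis permute_list_nth)
  define J where "J = {m \<in> {..<length u}. \<pi> m \<in> I}"
  have inj: "inj_on \<pi> J"
    using \<pi>(1) permutes_inj_on by blast
  have image: "\<pi> ` J = I"
  proof
    show "\<pi> ` J \<subseteq> I"
      by (auto simp: J_def)
    show "I \<subseteq> \<pi> ` J"
    proof
      fix i assume i: "i \<in> I"
      then obtain m where "m \<in> {..<length u}" "\<pi> m = i"
        using assms(1) permutes_image[OF \<pi>(1)] by (metis image_iff subsetD)
      then show "i \<in> \<pi> ` J"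
        using i by (auto simp: J_def)
    qed
  qed
  have "(\<Sum>i\<in>I. u ! i) = (\<Sum>m\<in>J. u ! \<pi> m)"
    using sum.reindex[OF inj, of "\<lambda>i. u ! i"] image by simp
  also have "\<dots> = (\<Sum>m\<in>J. dec_rearr u ! m)"
    by (rule sum.cong) (auto simp: J_def nth_dec)
  also have "\<dots> \<le> (\<Sum>i<k. dec_rearr u ! i)"
    by (rule sum_subset_le_sum_prefix)
       (use dec_rearr_antimono card_image[OF inj] image assms in \<open>auto simp: J_def\<close>)
  also have "\<dots> = sum_list (take k (dec_rearr u))"
    using assms card_mono[OF _ assms(1)] by (simp add: sum_list_take_eq_sum_nth)
  finally show ?thesis .
qed

lemma sum_take_dec_rearr_attained:
  assumes "k \<le> length u"
  obtains I where "I \<subseteq> {..<length u}" "card I = k" "(\<Sum>i\<in>I. u ! i) = sum_list (take k (dec_rearr u))"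
proof -
  obtain \<pi> where \<pi>: "\<pi> permutes {..<length u}" "permute_list \<pi> u = dec_rearr u"
    using mset_eq_permutation[of "dec_rearr u" u] by auto
  have nth_dec: "dec_rearr u ! m = u ! \<pi> m" if "m < length u" for m
    using \<pi> that by (metis permute_list_nth)
  have inj: "inj_on \<pi> {..<k}"
    using \<pi>(1) permutes_inj_on by blast
  have "(\<Sum>i\<in>\<pi> ` {..<k}. u ! i) = (\<Sum>m<k. u ! \<pi> m)"
    using sum.reindex[OF inj, of "\<lambda>i. u ! i"] by simp
  also have "\<dots> = (\<Sum>m<k. dec_rearr u ! m)"
    by (rule sum.cong) (use assms in \<open>auto simp: nth_dec\<close>)
  also have "\<dots> = sum_list (take k (dec_rearr u))"
    using assms by (simp add: sum_list_take_eq_sum_nth)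
  finally have "(\<Sum>i\<in>\<pi> ` {..<k}. u ! i) = sum_list (take k (dec_rearr u))" .
  moreover have "\<pi> ` {..<k} \<subseteq> {..<length u}"
    using \<pi>(1) assms permutes_in_image by fastforce
  ultimately show ?thesis
    using that card_image[OF inj] by simp
qed

text \<open>Moving the pair of exponents \<open>(u\<^sub>p, u\<^sub>p\<^sub>+\<^sub>1)\<close> closer together keeps the total and
  lowers every partial sum of the decreasing rearrangement; strictly inside, it also changes
  the multiset, as the sum of squares drops.\<close>

lemma redistribute_bounds:
  assumes "Suc p < length u" "min (u ! p) (u ! Suc p) \<le> x" "x \<le> max (u ! p) (u ! Suc p)"
  shows "redistribute u p x ! p = x"
    and "redistribute u p x ! Suc p = u ! p + u ! Suc p - x"
    and "u ! p + u ! Suc p - x \<le> max (u ! p) (u ! Suc p)"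
    and "i \<noteq> p \<Longrightarrow> i \<noteq> Suc p \<Longrightarrow> redistribute u p x ! i = u ! i"
  using assms by (auto simp: redistribute_def nth_list_update)

lemma sum_redistribute_split:
  fixes f :: "nat \<Rightarrow> nat"
  assumes "finite I"
  shows "(\<Sum>i\<in>I. f i) = (\<Sum>i\<in>I - {p, Suc p}. f i) + (\<Sum>i\<in>I \<inter> {p, Suc p}. f i)"
    and "(\<Sum>i\<in>I - {p, Suc p}. redistribute u p x ! i) = (\<Sum>i\<in>I - {p, Suc p}. u ! i)"
  using assms by (metis sum.Int_Diff add.commute) (auto simp: redistribute_def intro: sum.cong)

lemma sum_subset_redistribute_le:
  assumes sp: "Suc p < length u" and x: "min (u ! p) (u ! Suc p) \<le> x" "x \<le> max (u ! p) (u ! Suc p)"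
    and I: "I \<subseteq> {..<length u}"
  obtains J where "J \<subseteq> {..<length u}" "card J = card I"
    "(\<Sum>i\<in>I. redistribute u p x ! i) \<le> (\<Sum>i\<in>J. u ! i)"
proof -
  let ?w = "redistribute u p x"
  let ?P = "{p, Suc p}"
  note w = redistribute_bounds[OF assms(1-3)]
  have fin: "finite I"
    using I finite_subset by blast
  have split: "(\<Sum>i\<in>I. f i) = (\<Sum>i\<in>I - ?P. f i) + (\<Sum>i\<in>I \<inter> ?P. f i)" for f :: "nat \<Rightarrow> nat"
    by (rule sum_redistribute_split(1)[OF fin])
  note outside = sum_redistribute_split(2)[OF fin, where p = p and u = u and x = x]
  show ?thesis
  proof (cases "(p \<in> I) = (Suc p \<in> I)")
    case True
    then have "I \<inter> ?P = ?P \<or> I \<inter> ?P = {}"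
      by blast
    then have "(\<Sum>i\<in>I \<inter> ?P. ?w ! i) = (\<Sum>i\<in>I \<inter> ?P. u ! i)"
      using x w(1,2) by (elim disjE) simp_all
    then show ?thesis
      using that[of I] I split[of "\<lambda>i. ?w ! i"] split[of "\<lambda>i. u ! i"] outside by simp
  next
    case False
    then obtain r where r: "I \<inter> ?P = {r}" "r \<in> ?P"
      by (cases "p \<in> I") auto
    define q where "q = (if u ! Suc p \<le> u ! p then p else Suc p)"
    have q: "u ! q = max (u ! p) (u ! Suc p)" "q \<in> ?P"
      by (auto simp: q_def max_def)
    have "?w ! r \<le> u ! q"
      using r(2) w(1-3) x(2) q(1) by auto
    then have "(\<Sum>i\<in>I. ?w ! i) \<le> (\<Sum>i\<in>insert q (I - ?P). u ! i)"
      using split[of "\<lambda>i. ?w ! i"] outside r(1) fin q(2) by simp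
    moreover have "card (insert q (I - ?P)) = card I"
      using r fin q(2) card_Int_Diff[OF fin, of ?P] by (simp add: card_insert_disjoint)
    moreover have "insert q (I - ?P) \<subseteq> {..<length u}"
      using I sp q(2) by auto
    ultimately show ?thesis
      using that by blast
  qed
qed

lemma dom_le_dec_rearr_redistribute:
  assumes "Suc p < length u" "min (u ! p) (u ! Suc p) \<le> x" "x \<le> max (u ! p) (u ! Suc p)"
  shows "dom_le (dec_rearr (redistribute u p x)) (dec_rearr u)"
  unfolding dom_le_def
proof (intro allI impI)
  fix k assume "k \<le> length (dec_rearr (redistribute u p x))"
  then obtain I where I: "I \<subseteq> {..<length u}" "card I = k"
    "(\<Sum>i\<in>I. redistribute u p x ! i) = sum_list (take k (dec_rearr (redistribute u p x)))"
    by (metis length_dec_rearr length_redistribute sum_take_dec_rearr_attained)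
  obtain J where "J \<subseteq> {..<length u}" "card J = k"
    "(\<Sum>i\<in>I. redistribute u p x ! i) \<le> (\<Sum>i\<in>J. u ! i)"
    using sum_subset_redistribute_le[OF assms I(1)] I(2) by metis
  with I(3) show "sum_list (take k (dec_rearr (redistribute u p x))) \<le> sum_list (take k (dec_rearr u))"
    using sum_subset_le_sum_take_dec_rearr[of J u k] by simp
qed

lemma sum_squares_eq_of_mset_eq:
  fixes u w :: "nat list"
  assumes "mset w = mset u"
  shows "(\<Sum>i<length w. (w ! i)\<^sup>2) = (\<Sum>i<length u. (u ! i)\<^sup>2)"
proof -
  have "(\<Sum>i<length xs. (xs ! i)\<^sup>2) = sum_mset (image_mset (\<lambda>z. z\<^sup>2) (mset xs))" for xs :: "nat list"
  proof -
    have "(\<Sum>i<length xs. (xs ! i)\<^sup>2) = sum_list (map (\<lambda>z. z\<^sup>2) xs)"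
      by (simp add: sum_list_sum_nth atLeast0LessThan)
    then show ?thesis
      by (simp add: sum_mset_sum_list[symmetric])
  qed
  then show ?thesis
    using assms by metis
qed

lemma mset_redistribute_neq:
  assumes sp: "Suc p < length u"
    and x: "min (u ! p) (u ! Suc p) < x" "x < max (u ! p) (u ! Suc p)"
  shows "mset (redistribute u p x) \<noteq> mset u"
proof
  assume m: "mset (redistribute u p x) = mset u"
  define a where "a = u ! p"
  define b where "b = u ! Suc p"
  define y where "y = a + b - x"
  let ?P = "{p, Suc p}"
  let ?w = "redistribute u p x"
  note w = redistribute_bounds[OF sp, of x]
  have split: "(\<Sum>i<length u. f i) = (\<Sum>i\<in>{..<length u} - ?P. f i) + f p + f (Suc p)"
    for f :: "nat \<Rightarrow> nat"
    using sp by (subst sum.subset_diff[of ?P]) auto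
  have "(\<Sum>i\<in>{..<length u} - ?P. (?w ! i)\<^sup>2) = (\<Sum>i\<in>{..<length u} - ?P. (u ! i)\<^sup>2)"
    by (rule sum.cong) (use x w(4) in auto)
  then have "x\<^sup>2 + y\<^sup>2 = a\<^sup>2 + b\<^sup>2"
    using sum_squares_eq_of_mset_eq[OF m] split[of "\<lambda>i. (?w ! i)\<^sup>2"] split[of "\<lambda>i. (u ! i)\<^sup>2"]
      w(1,2) x by (simp add: a_def b_def y_def)
  then have squares: "int x ^ 2 + int y ^ 2 = int a ^ 2 + int b ^ 2"
    by (metis of_nat_add of_nat_eq_iff of_nat_power)
  have sum: "int y = int a + int b - int x"
    using x by (simp add: a_def b_def y_def)
  then have "(int x + int y)\<^sup>2 = (int a + int b)\<^sup>2"
    by simp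
  then have "int x * int y = int a * int b"
    using squares by (simp add: power2_sum)
  moreover have "a < x \<and> x < b \<or> b < x \<and> x < a"
    using x by (auto simp: a_def b_def min_def max_def split: if_splits)
  then have "(int x - int a) * (int b - int x) > 0"
    by (auto intro: mult_pos_pos mult_neg_neg)
  ultimately show False
    by (simp add: sum algebra_simps)
qed

definition plus_lt :: "nat list \<Rightarrow> nat list \<Rightarrow> bool" where
  "plus_lt w u \<longleftrightarrow> dec_rearr w \<noteq> dec_rearr u \<and> dom_le (dec_rearr w) (dec_rearr u)"

lemma plus_lt_redistribute:
  assumes "Suc p < length u" "min (u ! p) (u ! Suc p) < x" "x < max (u ! p) (u ! Suc p)"
  shows "plus_lt (redistribute u p x) u"
  using assms dom_le_dec_rearr_redistribute[of p u x] mset_redistribute_neq[of p u x]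
  by (simp add: plus_lt_def dec_rearr_eq_iff)

lemma plus_lt_trans:
  assumes "plus_lt w u" "plus_lt u v" "length w = length u"
  shows "plus_lt w v"
proof -
  have "dom_le (dec_rearr w) (dec_rearr v)"
    using assms dom_le_trans by (auto simp: plus_lt_def)
  moreover have "dec_rearr w \<noteq> dec_rearr v"
    using assms dom_le_antisym[of "dec_rearr u" "dec_rearr w"] by (auto simp: plus_lt_def)
  ultimately show ?thesis
    by (simp add: plus_lt_def)
qed

lemma plus_lt_mset_cong:
  "mset w = mset w' \<Longrightarrow> mset v = mset v' \<Longrightarrow> plus_lt w v \<longleftrightarrow> plus_lt w' v'"
  unfolding plus_lt_def by (metis dec_rearr_eq_iff)

lemma tri_le_of_plus_lt: "plus_lt w v \<Longrightarrow> tri_le w v"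
  by (simp add: plus_lt_def tri_le_def)

section \<open>The cyclic Hecke module and the operators on tensors\<close>

lemma hact_eq_sum_superset:
  assumes "finite A" "Poly_Mapping.keys h \<subseteq> A"
  shows "hact lam N u h = (\<lambda>U. \<Sum>w\<in>A. Poly_Mapping.lookup h w * vec_word lam N w u U)"
  unfolding hact_def
  by (rule ext, rule sum.mono_neutral_left) (use assms in \<open>auto simp: in_keys_iff\<close>)

lemma vec_word_append: "vec_word lam N (w @ [i]) u = vecT lam N i (vec_word lam N w u)"
  by (simp add: vec_word_def)

lemma vecT_sum:
  "vecT lam N i (\<lambda>U. \<Sum>w\<in>A. c w * x w U) = (\<lambda>U. \<Sum>w\<in>A. c w * vecT lam N i (x w) U)"
  unfolding vecT_def
  by (rule ext) (simp add: sum_distrib_right sum_distrib_left mult.assoc sum.swap[of _ A])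

definition cyclic_span :: "nat list \<Rightarrow> nat \<Rightarrow> tab \<Rightarrow> vec set" where
  "cyclic_span lam N T0 = {hact lam N (basis T0) h | h. is_hecke N h}"

lemma cyclic_span_intro: "is_hecke N h \<Longrightarrow> hact lam N (basis T0) h \<in> cyclic_span lam N T0"
  by (auto simp: cyclic_span_def)

lemma cyclic_span_0: "(\<lambda>U. 0) \<in> cyclic_span lam N T0"
  unfolding cyclic_span_def
  by (rule CollectI, rule exI[of _ 0]) (simp add: is_hecke_def hact_def)

lemma cyclic_span_basis: "basis T0 \<in> cyclic_span lam N T0"
proof -
  have "hact lam N (basis T0) (Poly_Mapping.single [] 1) = basis T0"
    by (subst hact_eq_sum_superset[where A = "{[]}"]) (auto simp: vec_word_def)
  moreover have "is_hecke N (Poly_Mapping.single [] 1)"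
    by (simp add: is_hecke_def)
  ultimately show ?thesis
    by (metis cyclic_span_intro)
qed

lemma cyclic_span_add:
  assumes "a \<in> cyclic_span lam N T0" "b \<in> cyclic_span lam N T0"
  shows "(\<lambda>U. a U + b U) \<in> cyclic_span lam N T0"
proof -
  obtain h1 h2 where h: "is_hecke N h1" "a = hact lam N (basis T0) h1"
    "is_hecke N h2" "b = hact lam N (basis T0) h2"
    using assms by (auto simp: cyclic_span_def)
  let ?A = "Poly_Mapping.keys h1 \<union> Poly_Mapping.keys h2"
  have "hact lam N (basis T0) h = (\<lambda>U. \<Sum>w\<in>?A. Poly_Mapping.lookup h w * vec_word lam N w (basis T0) U)"
    if "h \<in> {h1, h2, h1 + h2}" for h
    by (rule hact_eq_sum_superset) (use that keys_add[of h1 h2] in auto)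
  then have "hact lam N (basis T0) (h1 + h2) = (\<lambda>U. a U + b U)"
    unfolding h(2,4) by (simp add: lookup_add distrib_right sum.distrib)
  moreover have "is_hecke N (h1 + h2)"
    using h(1,3) keys_add[of h1 h2] unfolding is_hecke_def by blast
  ultimately show ?thesis
    by (metis cyclic_span_intro)
qed

lemma cyclic_span_smult:
  assumes "a \<in> cyclic_span lam N T0"
  shows "(\<lambda>U. c * a U) \<in> cyclic_span lam N T0"
proof -
  obtain h where h: "is_hecke N h" "a = hact lam N (basis T0) h"
    using assms by (auto simp: cyclic_span_def)
  define h' where "h' = Poly_Mapping.mapp (\<lambda>_ z. c * z) h"
  have lookup: "Poly_Mapping.lookup h' w = c * Poly_Mapping.lookup h w" for w
    by (simp add: h'_def lookup_mapp when_def in_keys_iff)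
  have keys: "Poly_Mapping.keys h' \<subseteq> Poly_Mapping.keys h"
    unfolding h'_def by (rule keys_mapp_subset)
  have "hact lam N (basis T0) h' = (\<lambda>U. c * a U)"
    unfolding h(2)
    by (subst (1 2) hact_eq_sum_superset[where A = "Poly_Mapping.keys h"])
       (use keys in \<open>auto simp: lookup sum_distrib_left mult.assoc\<close>)
  moreover have "is_hecke N h'"
    using h(1) keys unfolding is_hecke_def by blast
  ultimately show ?thesis
    by (metis cyclic_span_intro)
qed

lemma cyclic_span_vecT:
  assumes "a \<in> cyclic_span lam N T0" "i \<in> {1..<N}"
  shows "vecT lam N i a \<in> cyclic_span lam N T0"
proof -
  obtain h where h: "is_hecke N h" "a = hact lam N (basis T0) h"
    using assms by (auto simp: cyclic_span_def)
  let ?snoc = "\<lambda>w. w @ [i]"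
  define h' where "h' = (\<Sum>w\<in>Poly_Mapping.keys h. Poly_Mapping.single (?snoc w) (Poly_Mapping.lookup h w))"
  have inj: "inj_on ?snoc (Poly_Mapping.keys h)"
    by (auto simp: inj_on_def)
  have "Poly_Mapping.keys h' \<subseteq> (\<Union>w\<in>Poly_Mapping.keys h. Poly_Mapping.keys (Poly_Mapping.single (?snoc w) (Poly_Mapping.lookup h w)))"
    unfolding h'_def by (rule keys_sum)
  then have keys: "Poly_Mapping.keys h' \<subseteq> ?snoc ` Poly_Mapping.keys h"
    by auto
  have lookup: "Poly_Mapping.lookup h' (?snoc w) = Poly_Mapping.lookup h w"
    if "w \<in> Poly_Mapping.keys h" for w
  proof -
    have "Poly_Mapping.lookup h' (?snoc w)
        = (\<Sum>w'\<in>Poly_Mapping.keys h. if w' = w then Poly_Mapping.lookup h w' else 0)"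
      unfolding h'_def lookup_sum lookup_single by (rule sum.cong) (auto simp: when_def)
    then show ?thesis
      using that by simp
  qed
  have "hact lam N (basis T0) h'
      = (\<lambda>U. \<Sum>w'\<in>?snoc ` Poly_Mapping.keys h. Poly_Mapping.lookup h' w' * vec_word lam N w' (basis T0) U)"
    by (rule hact_eq_sum_superset) (use keys in auto)
  also have "\<dots> = vecT lam N i a"
    unfolding h(2) hact_def vecT_sum
    by (subst sum.reindex[OF inj]) (auto simp: lookup vec_word_append)
  finally have "hact lam N (basis T0) h' = vecT lam N i a" .
  moreover have "is_hecke N h'"
    using h(1) keys assms(2) unfolding is_hecke_def by fastforce
  ultimately show ?thesis
    by (metis cyclic_span_intro)
qed

lemma cyclic_span_vec_word:
  "a \<in> cyclic_span lam N T0 \<Longrightarrow> set w \<subseteq> {1..<N} \<Longrightarrow> vec_word lam N w a \<in> cyclic_span lam N T0"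
proof (induction w arbitrary: a)
  case (Cons i w)
  then show ?case
    using cyclic_span_vecT[of a lam N T0 i] by (simp add: vec_word_def)
qed (simp add: vec_word_def)

text \<open>\<open>mlin\<close> expands its argument in the tableau basis, so it acts on \<open>x^u \<otimes> a\<close> as
  \<open>\<phi>(x^u) \<otimes> g a\<close> only for maps \<open>g\<close> with this property.\<close>

definition basis_linear :: "nat list \<Rightarrow> nat \<Rightarrow> (vec \<Rightarrow> vec) \<Rightarrow> bool" where
  "basis_linear lam N g \<longleftrightarrow> (\<forall>a U. g a U = (\<Sum>T\<in>Tab lam N. a T * g (basis T) U))"

lemma finite_cells: "finite (cells lam)"
proof -
  have "cells lam \<subseteq> {..<length lam} \<times> {..<sum_list lam}"
    using elem_le_sum_list by (fastforce simp: cells_def)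
  then show ?thesis
    by (rule finite_subset) simp
qed

lemma finite_Tab: "finite (Tab lam N)"
proof -
  have "Tab lam N \<subseteq> {L. set L \<subseteq> cells lam \<and> length L = N}"
    unfolding Tab_def by auto
  then show ?thesis
    by (rule finite_subset) (simp add: finite_lists_length_eq finite_cells)
qed

lemma vecT_basis: "T \<in> Tab lam N \<Longrightarrow> vecT lam N i (basis T) U = coefT i T U"
proof -
  assume "T \<in> Tab lam N"
  moreover have "vecT lam N i (basis T) U = (\<Sum>T'\<in>Tab lam N. if T' = T then coefT i T' U else 0)"
    unfolding vecT_def basis_def by (rule sum.cong) auto
  ultimately show ?thesis
    using finite_Tab by simp
qed

lemma basis_linear_vecT: "basis_linear lam N (vecT lam N i)"
  unfolding basis_linear_def
proof (intro allI)
  fix a U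
  show "vecT lam N i a U = (\<Sum>T\<in>Tab lam N. a T * vecT lam N i (basis T) U)"
    unfolding vecT_def[of lam N i a] by (rule sum.cong) (auto simp: vecT_basis)
qed

lemma basis_linear_comp:
  assumes "basis_linear lam N g" "basis_linear lam N h"
  shows "basis_linear lam N (\<lambda>a. h (g a))"
  unfolding basis_linear_def
proof (intro allI)
  fix a U
  have g: "g b V = (\<Sum>T\<in>Tab lam N. b T * g (basis T) V)" for b V
    using assms(1) unfolding basis_linear_def by blast
  have h: "h b V = (\<Sum>T\<in>Tab lam N. b T * h (basis T) V)" for b V
    using assms(2) unfolding basis_linear_def by blast
  have "h (g a) U = (\<Sum>T'\<in>Tab lam N. \<Sum>T\<in>Tab lam N. a T * g (basis T) T' * h (basis T') U)"
    by (subst h, subst g) (simp add: sum_distrib_right)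
  also have "\<dots> = (\<Sum>T\<in>Tab lam N. a T * (\<Sum>T'\<in>Tab lam N. g (basis T) T' * h (basis T') U))"
    by (subst sum.swap) (simp add: sum_distrib_left mult.assoc)
  also have "\<dots> = (\<Sum>T\<in>Tab lam N. a T * h (g (basis T)) U)"
    by (subst (2) h) (rule refl)
  finally show "h (g a) U = (\<Sum>T\<in>Tab lam N. a T * h (g (basis T)) U)" .
qed

lemma basis_linear_vec_word: "w \<noteq> [] \<Longrightarrow> basis_linear lam N (vec_word lam N w)"
proof (induction w rule: rev_nonempty_induct)
  case (single i)
  then show ?case
    using basis_linear_vecT by (simp add: vec_word_def)
next
  case (snoc i w)
  then show ?case
    using basis_linear_comp[OF snoc.IH basis_linear_vecT] by (simp add: vec_word_append)
qed

lemma mlin_tensor: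
  assumes \<phi>: "\<And>c. \<phi> (Poly_Mapping.single (mono u) c) = Poly_Mapping.single (mono u') (c * \<kappa>)"
    and g: "basis_linear lam N g"
  shows "mlin lam N \<phi> g (tensor u a) = tensor u' (\<lambda>U. \<kappa> * g a U)"
proof (rule ext)
  fix U
  have "mlin lam N \<phi> g (tensor u a) U
      = Poly_Mapping.single (mono u') (\<kappa> * (\<Sum>T\<in>Tab lam N. a T * g (basis T) U))"
    unfolding mlin_def tensor_def \<phi>
    by (simp add: const_mult_single single_sum sum_distrib_left mult_ac)
  also have "\<dots> = tensor u' (\<lambda>U. \<kappa> * g a U) U"
    using g unfolding basis_linear_def tensor_def by metis
  finally show "mlin lam N \<phi> g (tensor u a) U = tensor u' (\<lambda>U. \<kappa> * g a U) U" .
qed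

lemma tensor_add: "tensor u (\<lambda>U. a U + b U) = (\<lambda>U. tensor u a U + tensor u b U)"
  by (simp add: tensor_def single_add)

lemma const_mult_tensor: "const c * tensor u a U = tensor u (\<lambda>U. c * a U) U"
  by (simp add: tensor_def const_mult_single)

lemma opT_tensor:
  assumes "Suc p < length u"
  shows "opT lam N (Suc p) (tensor u a) =
    (\<lambda>U. (\<Sum>x\<in>redistribute_range u p.
            tensor (redistribute u p x) (\<lambda>U. redistribute_sign u p * (1 - s_par) * a U) U)
         + tensor (swap_adj p u) (vecT lam N (Suc p) a) U)"
proof -
  have "mlin lam N (swapvars (Suc p)) (vecT lam N (Suc p)) (tensor u a)
      = tensor (swap_adj p u) (\<lambda>U. 1 * vecT lam N (Suc p) a U)"
    by (rule mlin_tensor[OF _ basis_linear_vecT]) (simp add: swapvars_single[OF assms])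
  moreover have "const (1 - s_par) * ddiff (Suc p) (tensor u a U)
     = (\<Sum>x\<in>redistribute_range u p.
          tensor (redistribute u p x) (\<lambda>U. redistribute_sign u p * (1 - s_par) * a U) U)" for U
    unfolding tensor_def ddiff_single[OF assms]
    by (simp add: sum_distrib_left single_mono_eq_const_xpow const_mult mult_ac)
  ultimately show ?thesis
    by (simp add: opT_def)
qed

lemma opW_tensor:
  assumes "2 \<le> N" "length u = N"
  shows "opW lam N (tensor u a) = tensor (rotate1 u) (\<lambda>U. q_par ^ hd u * vec_word lam N [1..<N] a U)"
  unfolding opW_def
proof (rule mlin_tensor)
  show "wsubst N (Poly_Mapping.single (mono u) c) = Poly_Mapping.single (mono (rotate1 u)) (c * q_par ^ hd u)" for c
    by (rule wsubst_single) (use assms in auto)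
  show "basis_linear lam N (vec_word lam N [1..<N])"
    by (rule basis_linear_vec_word) (use assms(1) in simp)
qed

lemma mlin_add:
  assumes "\<And>f g. \<phi> (f + g) = \<phi> f + \<phi> g"
  shows "mlin lam N \<phi> g (\<lambda>U. f U + h U) = (\<lambda>U. mlin lam N \<phi> g f U + mlin lam N \<phi> g h U)"
  unfolding mlin_def by (simp add: assms distrib_right sum.distrib)

lemma mlin_0: "\<phi> 0 = 0 \<Longrightarrow> mlin lam N \<phi> g (\<lambda>U. 0) = (\<lambda>U. 0)"
  unfolding mlin_def by simp

lemma opT_add: "opT lam N (Suc p) (\<lambda>U. f U + g U) = (\<lambda>U. opT lam N (Suc p) f U + opT lam N (Suc p) g U)"
  unfolding opT_def mlin_add[of "swapvars (Suc p)", OF swapvars_add]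
  by (simp add: ddiff_add distrib_left add_ac)

lemma opT_0: "opT lam N (Suc p) (\<lambda>U. 0) = (\<lambda>U. 0)"
  unfolding opT_def by (simp add: mlin_0 swapvars_def)

lemma opTinv_add:
  "opTinv lam N (Suc p) (\<lambda>U. f U + g U) = (\<lambda>U. opTinv lam N (Suc p) f U + opTinv lam N (Suc p) g U)"
  unfolding opTinv_def by (simp add: opT_add algebra_simps)

lemma opTinv_0: "opTinv lam N (Suc p) (\<lambda>U. 0) = (\<lambda>U. 0)"
  unfolding opTinv_def by (simp add: opT_0)

lemma opW_add: "opW lam N (\<lambda>U. f U + g U) = (\<lambda>U. opW lam N f U + opW lam N g U)"
  unfolding opW_def by (rule mlin_add) (simp add: wsubst_def psubst_add)

lemma opW_0: "opW lam N (\<lambda>U. 0) = (\<lambda>U. 0)"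
  unfolding opW_def by (simp add: mlin_0 wsubst_def)

inductive in_tensor_span :: "nat list \<Rightarrow> nat \<Rightarrow> tab \<Rightarrow> (nat list \<Rightarrow> bool) \<Rightarrow> modl \<Rightarrow> bool"
  for lam N T0 P where
  in_tensor_span_0: "in_tensor_span lam N T0 P (\<lambda>U. 0)"
| in_tensor_span_tensor:
    "P u \<Longrightarrow> length u = N \<Longrightarrow> a \<in> cyclic_span lam N T0 \<Longrightarrow> in_tensor_span lam N T0 P (tensor u a)"
| in_tensor_span_add:
    "in_tensor_span lam N T0 P f \<Longrightarrow> in_tensor_span lam N T0 P g
       \<Longrightarrow> in_tensor_span lam N T0 P (\<lambda>U. f U + g U)"

lemma in_tensor_span_sum:
  "(\<And>x. x \<in> A \<Longrightarrow> in_tensor_span lam N T0 P (F x))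
     \<Longrightarrow> in_tensor_span lam N T0 P (\<lambda>U. \<Sum>x\<in>A. F x U)"
proof (induction A rule: infinite_finite_induct)
  case (insert x A)
  then show ?case
    using in_tensor_span_add[of lam N T0 P "F x" "\<lambda>U. \<Sum>x\<in>A. F x U"] by simp
qed (simp_all add: in_tensor_span_0)

lemma in_tensor_span_mono:
  assumes "in_tensor_span lam N T0 P f" "\<And>u. P u \<Longrightarrow> length u = N \<Longrightarrow> Q u"
  shows "in_tensor_span lam N T0 Q f"
  using assms(1) by induction (auto intro: in_tensor_span.intros assms(2))

lemma in_tensor_span_map:
  assumes "\<And>f g. op (\<lambda>U. f U + g U) = (\<lambda>U. op f U + op g U)" "op (\<lambda>U. 0) = (\<lambda>U. 0)"
    and "\<And>u a. P u \<Longrightarrow> length u = N \<Longrightarrow> a \<in> cyclic_span lam N T0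
            \<Longrightarrow> in_tensor_span lam N T0 Q (op (tensor u a))"
    and "in_tensor_span lam N T0 P f"
  shows "in_tensor_span lam N T0 Q (op f)"
  using assms(4) by induction (simp_all add: assms(1-3) in_tensor_span.intros)

lemma in_tensor_span_smult:
  assumes "in_tensor_span lam N T0 P f"
  shows "in_tensor_span lam N T0 P (\<lambda>U. const c * f U)"
  by (rule in_tensor_span_map[where op = "\<lambda>f U. const c * f U", OF _ _ _ assms])
     (simp_all add: distrib_left const_mult_tensor in_tensor_span_tensor cyclic_span_smult)

section \<open>Following the exponents through \<open>\<Xi>\<^sub>j\<close>\<close>

lemma redistribute_cases:
  assumes "Suc p < length u" "x \<in> redistribute_range u p"
  shows "redistribute u p x = swap_adj p u \<or> (redistribute u p x = u \<and> u ! p \<le> u ! Suc p)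
           \<or> plus_lt (redistribute u p x) u"
proof (cases "x = u ! Suc p \<and> u ! Suc p < u ! p \<or> x = u ! p")
  case True
  then show ?thesis
    using assms(2) by (auto simp: redistribute_def swap_adj_def redistribute_range_def split: if_splits)
next
  case False
  then show ?thesis
    using assms by (intro disjI2 plus_lt_redistribute) (auto simp: redistribute_range_def split: if_splits)
qed

lemma in_tensor_span_opT_tensor:
  assumes "Suc p < N" "length u = N" "a \<in> cyclic_span lam N T0"
  shows "in_tensor_span lam N T0 (\<lambda>w. w = swap_adj p u \<or> (w = u \<and> u ! p \<le> u ! Suc p) \<or> plus_lt w u)
           (opT lam N (Suc p) (tensor u a))"
  unfolding opT_tensor[OF assms(1)[folded assms(2)]]
proof (intro in_tensor_span_add in_tensor_span_sum)
  fix x assume "x \<in> redistribute_range u p"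
  then show "in_tensor_span lam N T0 (\<lambda>w. w = swap_adj p u \<or> (w = u \<and> u ! p \<le> u ! Suc p) \<or> plus_lt w u)
      (tensor (redistribute u p x) (\<lambda>U. redistribute_sign u p * (1 - s_par) * a U))"
    using redistribute_cases[of p u x] assms
    by (intro in_tensor_span_tensor cyclic_span_smult) auto
next
  show "in_tensor_span lam N T0 (\<lambda>w. w = swap_adj p u \<or> (w = u \<and> u ! p \<le> u ! Suc p) \<or> plus_lt w u)
      (tensor (swap_adj p u) (vecT lam N (Suc p) a))"
    using assms by (intro in_tensor_span_tensor cyclic_span_vecT) auto
qed

text \<open>For \<open>u\<^sub>p < u\<^sub>p\<^sub>+\<^sub>1\<close> the term \<open>x = u\<^sub>p\<close> of the divided difference is \<open>-x^u\<close>, and it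
  cancels against the correction \<open>(1 - s) x^u\<close> in \<open>T\<^sub>i\<^sup>-\<^sup>1 = s\<^sup>-\<^sup>1(T\<^sub>i + 1 - s)\<close>.\<close>

lemma opTinv_tensor_ascending:
  assumes "Suc p < length u" "u ! p < u ! Suc p"
  shows "opTinv lam N (Suc p) (tensor u a) = (\<lambda>U. const (inverse s_par) *
    ((\<Sum>x\<in>{Suc (u ! p)..<u ! Suc p}. tensor (redistribute u p x) (\<lambda>U. (s_par - 1) * a U) U)
     + tensor (swap_adj p u) (vecT lam N (Suc p) a) U))"
proof (rule ext)
  fix U
  define F where "F x = tensor (redistribute u p x) (\<lambda>U. (s_par - 1) * a U) U" for x
  have range: "redistribute_range u p = insert (u ! p) {Suc (u ! p)..<u ! Suc p}"
    using assms(2) by (auto simp: redistribute_range_def)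
  have cancel: "F (u ! p) + tensor u (\<lambda>U. (1 - s_par) * a U) U = 0"
    by (simp add: F_def redistribute_def tensor_def algebra_simps flip: single_add)
  have "opT lam N (Suc p) (tensor u a) U + tensor u (\<lambda>U. (1 - s_par) * a U) U
      = (F (u ! p) + tensor u (\<lambda>U. (1 - s_par) * a U) U) + (\<Sum>x\<in>{Suc (u ! p)..<u ! Suc p}. F x)
        + tensor (swap_adj p u) (vecT lam N (Suc p) a) U"
    using assms by (simp add: opT_tensor range F_def redistribute_sign_def add_ac)
  then show "opTinv lam N (Suc p) (tensor u a) U = const (inverse s_par) *
      ((\<Sum>x\<in>{Suc (u ! p)..<u ! Suc p}. F x) + tensor (swap_adj p u) (vecT lam N (Suc p) a) U)"
    unfolding opTinv_def const_mult_tensor cancel by simp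
qed

lemma in_tensor_span_opTinv_tensor:
  assumes "Suc p < N" "length u = N" "a \<in> cyclic_span lam N T0"
  shows "in_tensor_span lam N T0 (\<lambda>w. w = swap_adj p u \<or> (w = u \<and> u ! Suc p \<le> u ! p) \<or> plus_lt w u)
           (opTinv lam N (Suc p) (tensor u a))"
proof (cases "u ! p < u ! Suc p")
  case False
  then have "in_tensor_span lam N T0 (\<lambda>w. w = swap_adj p u \<or> (w = u \<and> u ! Suc p \<le> u ! p) \<or> plus_lt w u)
      (\<lambda>U. opT lam N (Suc p) (tensor u a) U + tensor u (\<lambda>U. (1 - s_par) * a U) U)"
    using assms
    by (intro in_tensor_span_add in_tensor_span_mono[OF in_tensor_span_opT_tensor[OF assms]]
        in_tensor_span_tensor cyclic_span_smult) auto
  then show ?thesis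
    unfolding opTinv_def const_mult_tensor by (rule in_tensor_span_smult)
next
  case True
  let ?P = "\<lambda>w. w = swap_adj p u \<or> (w = u \<and> u ! Suc p \<le> u ! p) \<or> plus_lt w u"
  have "in_tensor_span lam N T0 ?P (tensor (redistribute u p x) (\<lambda>U. (s_par - 1) * a U))"
    if "x \<in> {Suc (u ! p)..<u ! Suc p}" for x
    using that True assms plus_lt_redistribute[of p u x]
    by (intro in_tensor_span_tensor cyclic_span_smult) auto
  moreover have "in_tensor_span lam N T0 ?P (tensor (swap_adj p u) (vecT lam N (Suc p) a))"
    using assms by (intro in_tensor_span_tensor cyclic_span_vecT) auto
  ultimately show ?thesis
    unfolding opTinv_tensor_ascending[OF assms(1)[folded assms(2)] True]
    by (intro in_tensor_span_smult in_tensor_span_add in_tensor_span_sum)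
qed

lemma plus_lt_or_inv_step:
  assumes "w = swap_adj p u \<or> (w = u \<and> C) \<or> plus_lt w u" "plus_lt u v \<or> I u"
    and "Suc p < length u" "length w = length u" "I u \<Longrightarrow> mset u = mset v"
    and "I u \<Longrightarrow> J (swap_adj p u)" "I u \<Longrightarrow> C \<Longrightarrow> J u"
  shows "plus_lt w v \<or> J w"
proof (cases "plus_lt u v")
  case True
  then have "plus_lt (swap_adj p u) v"
    using plus_lt_mset_cong[OF mset_swap_adj[OF assms(3)] refl[of "mset v"]] by simp
  then show ?thesis
    using assms(1,4) True plus_lt_trans[of w u v] by auto
next
  case False
  then have "I u" "mset u = mset v"
    using assms(2,5) by auto
  then show ?thesis
    using assms(1,6,7) plus_lt_mset_cong[OF refl[of "mset w"], of u v] by auto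
qed

lemma in_tensor_span_step:
  assumes "\<And>f g. op (\<lambda>U. f U + g U) = (\<lambda>U. op f U + op g U)" "op (\<lambda>U. 0) = (\<lambda>U. 0)"
    and "\<And>u a. length u = N \<Longrightarrow> a \<in> cyclic_span lam N T0 \<Longrightarrow>
           in_tensor_span lam N T0 (\<lambda>w. w = swap_adj p u \<or> (w = u \<and> C u) \<or> plus_lt w u) (op (tensor u a))"
    and "Suc p < N" "in_tensor_span lam N T0 (\<lambda>w. plus_lt w v \<or> I w) f"
    and "\<And>u. length u = N \<Longrightarrow> I u \<Longrightarrow> mset u = mset v"
    and "\<And>u. length u = N \<Longrightarrow> I u \<Longrightarrow> J (swap_adj p u)"
    and "\<And>u. length u = N \<Longrightarrow> I u \<Longrightarrow> C u \<Longrightarrow> J u"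
  shows "in_tensor_span lam N T0 (\<lambda>w. plus_lt w v \<or> J w) (op f)"
proof (rule in_tensor_span_map[OF assms(1,2) _ assms(5)])
  fix u a assume u: "plus_lt u v \<or> I u" "length u = N" "a \<in> cyclic_span lam N T0"
  show "in_tensor_span lam N T0 (\<lambda>w. plus_lt w v \<or> J w) (op (tensor u a))"
  proof (rule in_tensor_span_mono[OF assms(3)[OF u(2,3)]])
    fix w assume w: "w = swap_adj p u \<or> (w = u \<and> C u) \<or> plus_lt w u" "length w = N"
    show "plus_lt w v \<or> J w"
      by (rule plus_lt_or_inv_step[where I = I, OF w(1) u(1)]) (use assms(4,6-8) u(2) w(2) in auto)
  qed
qed

lemma in_tensor_span_opT:
  assumes "Suc p < N" "in_tensor_span lam N T0 (\<lambda>w. plus_lt w v \<or> I w) f"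
    and "\<And>u. length u = N \<Longrightarrow> I u \<Longrightarrow> mset u = mset v"
    and "\<And>u. length u = N \<Longrightarrow> I u \<Longrightarrow> J (swap_adj p u)"
    and "\<And>u. length u = N \<Longrightarrow> I u \<Longrightarrow> u ! p \<le> u ! Suc p \<Longrightarrow> J u"
  shows "in_tensor_span lam N T0 (\<lambda>w. plus_lt w v \<or> J w) (opT lam N (Suc p) f)"
  using in_tensor_span_opT_tensor[OF assms(1)] assms
  by (intro in_tensor_span_step[OF opT_add opT_0, where C = "\<lambda>u. u ! p \<le> u ! Suc p"])

lemma in_tensor_span_opTinv:
  assumes "Suc p < N" "in_tensor_span lam N T0 (\<lambda>w. plus_lt w v \<or> I w) f"
    and "\<And>u. length u = N \<Longrightarrow> I u \<Longrightarrow> mset u = mset v"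
    and "\<And>u. length u = N \<Longrightarrow> I u \<Longrightarrow> J (swap_adj p u)"
    and "\<And>u. length u = N \<Longrightarrow> I u \<Longrightarrow> u ! Suc p \<le> u ! p \<Longrightarrow> J u"
  shows "in_tensor_span lam N T0 (\<lambda>w. plus_lt w v \<or> J w) (opTinv lam N (Suc p) f)"
  using in_tensor_span_opTinv_tensor[OF assms(1)] assms
  by (intro in_tensor_span_step[OF opTinv_add opTinv_0, where C = "\<lambda>u. u ! Suc p \<le> u ! p"])

lemma in_tensor_span_opW:
  assumes "2 \<le> N" "in_tensor_span lam N T0 (\<lambda>w. plus_lt w v \<or> I w) f"
    and "\<And>u. length u = N \<Longrightarrow> I u \<Longrightarrow> J (rotate1 u)"
  shows "in_tensor_span lam N T0 (\<lambda>w. plus_lt w v \<or> J w) (opW lam N f)"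
proof (rule in_tensor_span_map[OF opW_add opW_0 _ assms(2)])
  fix u a assume u: "plus_lt u v \<or> I u" "length u = N" "a \<in> cyclic_span lam N T0"
  have "plus_lt (rotate1 u) v \<or> J (rotate1 u)"
    using u(1,2) assms(3) plus_lt_mset_cong[OF mset_rotate1[of u] refl[of "mset v"]] by auto
  then show "in_tensor_span lam N T0 (\<lambda>w. plus_lt w v \<or> J w) (opW lam N (tensor u a))"
    unfolding opW_tensor[OF assms(1) u(2)] using assms(1) u(2,3)
    by (intro in_tensor_span_tensor cyclic_span_smult cyclic_span_vec_word) auto
qed

lemma fold_rev_upt_induct:
  assumes "a \<le> b" "P b x" "\<And>c x. a \<le> c \<Longrightarrow> c < b \<Longrightarrow> P (Suc c) x \<Longrightarrow> P c (f c x)"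
  shows "P a (fold f (rev [a..<b]) x)"
  using assms
proof (induction b arbitrary: x)
  case (Suc b)
  show ?case
  proof (cases "a \<le> b")
    case True
    then show ?thesis
      using Suc.IH[of "f b x"] Suc.prems by simp
  next
    case False
    then show ?thesis
      using Suc.prems by (simp add: le_Suc_eq)
  qed
qed simp

text \<open>Invariant, after \<open>T\<^sub>j\<^sub>-\<^sub>1\<^sup>-\<^sup>1 \<cdots> T\<^sub>c\<^sub>+\<^sub>1\<^sup>-\<^sup>1\<close>, of the exponents that are rearrangements
  of \<open>v\<close> (positions are 0-based): the entry \<open>v ! (j - 1)\<close> has been carried to position \<open>c\<close>,
  and every entry it passed is at most the entry of \<open>v\<close> one place to its left.\<close>

definition carry_front_inv :: "nat list \<Rightarrow> nat \<Rightarrow> nat \<Rightarrow> nat \<Rightarrow> nat list \<Rightarrow> bool" where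
  "carry_front_inv v N j c w \<longleftrightarrow> mset w = mset v \<and> (\<forall>k<c. w ! k = v ! k)
     \<and> (\<forall>k. j \<le> k \<and> k < N \<longrightarrow> w ! k = v ! k) \<and> (\<forall>m. c < m \<and> m < j \<longrightarrow> w ! m \<le> v ! (m - 1))"

text \<open>The rotation by \<open>w\<close> moves the carried entry to position \<open>N - 1\<close>, and
  \<open>T\<^sub>N\<^sub>-\<^sub>1 \<cdots> T\<^sub>c\<^sub>+\<^sub>1\<close> carries it back to position \<open>c\<close>. At \<open>c = j - 1\<close> the prefix sums are at
  most those of \<open>v\<close>, up to position \<open>j - 1\<close> entrywise and beyond it because the suffix is
  entrywise at least that of \<open>v\<close>.\<close>

definition carry_back_inv :: "nat list \<Rightarrow> nat \<Rightarrow> nat \<Rightarrow> nat \<Rightarrow> nat list \<Rightarrow> bool" where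
  "carry_back_inv v N j c w \<longleftrightarrow> mset w = mset v \<and> (\<forall>k<j - 1. w ! k \<le> v ! k)
     \<and> (\<forall>k. j - 1 \<le> k \<and> k < c \<longrightarrow> w ! k = v ! Suc k) \<and> (\<forall>m. c < m \<and> m < N \<longrightarrow> v ! m \<le> w ! m)"

lemma carry_front_inv_start: "carry_front_inv v N j (j - 1) v"
  by (auto simp: carry_front_inv_def)

lemma carry_front_inv_swap:
  assumes "carry_front_inv v N j (Suc c) u" "Suc c < j" "j \<le> N" "length u = N"
  shows "carry_front_inv v N j c (swap_adj c u)"
  using assms mset_swap_adj[of c u]
  by (auto simp: carry_front_inv_def swap_adj_def nth_list_update less_Suc_eq)

lemma carry_front_inv_keep:
  assumes "carry_front_inv v N j (Suc c) u" "u ! Suc c \<le> u ! c"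
  shows "carry_front_inv v N j c u"
  unfolding carry_front_inv_def
proof (intro conjI allI impI)
  fix m assume m: "c < m \<and> m < j"
  show "u ! m \<le> v ! (m - 1)"
  proof (cases "m = Suc c")
    case True
    then show ?thesis
      using assms by (simp add: carry_front_inv_def)
  next
    case False
    then show ?thesis
      using assms m by (simp add: carry_front_inv_def)
  qed
qed (use assms in \<open>auto simp: carry_front_inv_def\<close>)

lemma carry_back_inv_rotate1:
  assumes "carry_front_inv v N j 0 u" "length u = N" "1 \<le> j" "j \<le> N"
  shows "carry_back_inv v N j (N - 1) (rotate1 u)"
  unfolding carry_back_inv_def
proof (intro conjI allI impI)
  have rot: "rotate1 u ! k = u ! Suc k" if "k < N - 1" for k
    using that assms(2) by (simp add: nth_rotate1)
  show "mset (rotate1 u) = mset v"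
    using assms(1) by (simp add: mset_rotate1 carry_front_inv_def)
  fix k
  show "rotate1 u ! k \<le> v ! k" if "k < j - 1"
  proof -
    have "\<forall>m. 0 < m \<and> m < j \<longrightarrow> u ! m \<le> v ! (m - 1)"
      using assms(1) by (simp add: carry_front_inv_def)
    then have "u ! Suc k \<le> v ! (Suc k - 1)"
      using that by (auto dest: spec[of _ "Suc k"])
    then show ?thesis
      using that assms rot[of k] by simp
  qed
  show "rotate1 u ! k = v ! Suc k" if "j - 1 \<le> k \<and> k < N - 1"
    using that assms rot[of k] by (auto simp: carry_front_inv_def dest: spec[of _ "Suc k"])
qed auto

lemma carry_back_inv_swap:
  assumes "carry_back_inv v N j (Suc c) u" "j - 1 \<le> c" "Suc c < N" "length u = N"
  shows "carry_back_inv v N j c (swap_adj c u)"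
  using assms mset_swap_adj[of c u]
  by (auto simp: carry_back_inv_def swap_adj_def nth_list_update less_Suc_eq)

lemma carry_back_inv_keep:
  assumes "carry_back_inv v N j (Suc c) u" "j - 1 \<le> c" "u ! c \<le> u ! Suc c"
  shows "carry_back_inv v N j c u"
  unfolding carry_back_inv_def
proof (intro conjI allI impI)
  fix m assume m: "c < m \<and> m < N"
  show "v ! m \<le> u ! m"
  proof (cases "m = Suc c")
    case True
    then show ?thesis
      using assms by (simp add: carry_back_inv_def)
  next
    case False
    then show ?thesis
      using assms m by (simp add: carry_back_inv_def)
  qed
qed (use assms in \<open>auto simp: carry_back_inv_def\<close>)

lemma tri_le_of_carry_back_inv:
  assumes "carry_back_inv v N j (j - 1) w" "length v = N" "length w = N"
  shows "tri_le w v"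
proof -
  have mset: "mset w = mset v"
    using assms(1) by (simp add: carry_back_inv_def)
  have "dom_le w v"
    unfolding dom_le_def
  proof (intro allI impI)
    fix i assume i: "i \<le> length w"
    have split: "(\<Sum>k<N. f k) = (\<Sum>k<i. f k) + (\<Sum>k\<in>{i..<N}. f k)" for f :: "nat \<Rightarrow> nat"
      using i assms(3) by (metis atLeast0LessThan sum.atLeastLessThan_concat zero_le)
    have "(\<Sum>k<i. w ! k) \<le> (\<Sum>k<i. v ! k)"
    proof (cases "i \<le> j - 1")
      case True
      then show ?thesis
        using assms(1) by (intro sum_mono) (auto simp: carry_back_inv_def)
    next
      case False
      have "sum_list w = sum_list v"
        using mset by (metis sum_mset_sum_list)
      then have "(\<Sum>k<N. w ! k) = (\<Sum>k<N. v ! k)"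
        using assms(2,3) by (simp add: sum_list_sum_nth atLeast0LessThan)
      moreover have "(\<Sum>k\<in>{i..<N}. v ! k) \<le> (\<Sum>k\<in>{i..<N}. w ! k)"
        using assms(1) False by (intro sum_mono) (auto simp: carry_back_inv_def)
      ultimately show ?thesis
        using split[of "\<lambda>k. w ! k"] split[of "\<lambda>k. v ! k"] by linarith
    qed
    then show "sum_list (take i w) \<le> sum_list (take i v)"
      using i assms(2,3) by (simp add: sum_list_take_eq_sum_nth)
  qed
  then show ?thesis
    using mset by (simp add: tri_le_def dec_rearr_eq_iff)
qed

lemma in_tensor_span_carry_front:
  assumes "1 \<le> j" "j \<le> N" "length v = N"
  shows "in_tensor_span lam N T0 (\<lambda>w. plus_lt w v \<or> carry_front_inv v N j 0 w)
           (fold (opTinv lam N) (rev [1..<j]) (tensor v (basis T0)))"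
proof -
  have "in_tensor_span lam N T0 (\<lambda>w. plus_lt w v \<or> carry_front_inv v N j (1 - 1) w)
      (fold (opTinv lam N) (rev [1..<j]) (tensor v (basis T0)))"
  proof (rule fold_rev_upt_induct[where P = "\<lambda>c. in_tensor_span lam N T0
            (\<lambda>w. plus_lt w v \<or> carry_front_inv v N j (c - 1) w)"])
    show "in_tensor_span lam N T0 (\<lambda>w. plus_lt w v \<or> carry_front_inv v N j (j - 1) w) (tensor v (basis T0))"
      using assms carry_front_inv_start by (intro in_tensor_span_tensor cyclic_span_basis) auto
  next
    fix c f assume c: "1 \<le> c" "c < j"
      and f: "in_tensor_span lam N T0 (\<lambda>w. plus_lt w v \<or> carry_front_inv v N j (Suc c - 1) w) f"
    obtain p where p: "c = Suc p"
      using c(1) by (cases c) auto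
    have "in_tensor_span lam N T0 (\<lambda>w. plus_lt w v \<or> carry_front_inv v N j p w) (opTinv lam N (Suc p) f)"
    proof (rule in_tensor_span_opTinv)
      show "Suc p < N"
        using c assms(2) p by simp
      show "in_tensor_span lam N T0 (\<lambda>w. plus_lt w v \<or> carry_front_inv v N j (Suc p) w) f"
        using f p by simp
      fix u assume u: "length u = N" "carry_front_inv v N j (Suc p) u"
      then show "mset u = mset v"
        by (simp add: carry_front_inv_def)
      show "carry_front_inv v N j p (swap_adj p u)"
        using carry_front_inv_swap[OF u(2)] c p assms(2) u(1) by simp
      show "carry_front_inv v N j p u" if "u ! Suc p \<le> u ! p"
        using carry_front_inv_keep[OF u(2) that] .
    qed
    then show "in_tensor_span lam N T0 (\<lambda>w. plus_lt w v \<or> carry_front_inv v N j (c - 1) w) (opTinv lam N c f)"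
      using p by simp
  qed (use assms in auto)
  then show ?thesis
    by simp
qed

lemma in_tensor_span_carry_back:
  assumes "1 \<le> j" "j \<le> N"
    and "in_tensor_span lam N T0 (\<lambda>w. plus_lt w v \<or> carry_back_inv v N j (N - 1) w) f"
  shows "in_tensor_span lam N T0 (\<lambda>w. plus_lt w v \<or> carry_back_inv v N j (j - 1) w)
           (fold (opT lam N) (rev [j..<N]) f)"
proof (rule fold_rev_upt_induct[where P = "\<lambda>c. in_tensor_span lam N T0
          (\<lambda>w. plus_lt w v \<or> carry_back_inv v N j (c - 1) w)"])
  fix c f assume c: "j \<le> c" "c < N"
    and f: "in_tensor_span lam N T0 (\<lambda>w. plus_lt w v \<or> carry_back_inv v N j (Suc c - 1) w) f"
  obtain p where p: "c = Suc p"
    using c assms(1) by (cases c) auto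
  have "in_tensor_span lam N T0 (\<lambda>w. plus_lt w v \<or> carry_back_inv v N j p w) (opT lam N (Suc p) f)"
  proof (rule in_tensor_span_opT)
    show "Suc p < N"
      using c p by simp
    show "in_tensor_span lam N T0 (\<lambda>w. plus_lt w v \<or> carry_back_inv v N j (Suc p) w) f"
      using f p by simp
    fix u assume u: "length u = N" "carry_back_inv v N j (Suc p) u"
    then show "mset u = mset v"
      by (simp add: carry_back_inv_def)
    show "carry_back_inv v N j p (swap_adj p u)"
      using carry_back_inv_swap[OF u(2)] c p u(1) by simp
    show "carry_back_inv v N j p u" if "u ! p \<le> u ! Suc p"
      using carry_back_inv_keep[OF u(2) _ that] c p by simp
  qed
  then show "in_tensor_span lam N T0 (\<lambda>w. plus_lt w v \<or> carry_back_inv v N j (c - 1) w) (opT lam N c f)"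
    using p by simp
qed (use assms in auto)

lemma in_tensor_span_Xi:
  assumes "2 \<le> N" "1 \<le> j" "j \<le> N" "length v = N"
  shows "in_tensor_span lam N T0 (\<lambda>w. tri_le w v) (Xi lam N j (tensor v (basis T0)))"
proof -
  let ?f1 = "fold (opTinv lam N) (rev [1..<j]) (tensor v (basis T0))"
  have "in_tensor_span lam N T0 (\<lambda>w. plus_lt w v \<or> carry_back_inv v N j (N - 1) w) (opW lam N ?f1)"
    by (rule in_tensor_span_opW[OF assms(1) in_tensor_span_carry_front[OF assms(2-4)]])
       (rule carry_back_inv_rotate1[OF _ _ assms(2,3)])
  then have "in_tensor_span lam N T0 (\<lambda>w. plus_lt w v \<or> carry_back_inv v N j (j - 1) w)
      (fold (opT lam N) (rev [j..<N]) (opW lam N ?f1))"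
    by (rule in_tensor_span_carry_back[OF assms(2,3)])
  then have "in_tensor_span lam N T0 (\<lambda>w. tri_le w v) (fold (opT lam N) (rev [j..<N]) (opW lam N ?f1))"
    by (rule in_tensor_span_mono) (use assms(4) tri_le_of_plus_lt tri_le_of_carry_back_inv in blast)
  then show ?thesis
    unfolding Xi_def Let_def by (rule in_tensor_span_smult)
qed

lemma sum_list_le_of_tri_le: "tri_le u v \<Longrightarrow> length u = length v \<Longrightarrow> sum_list u \<le> sum_list v"
  unfolding tri_le_def dom_le_def
  by (metis length_dec_rearr mset_dec_rearr order_refl sum_mset_sum_list take_all)

lemma finite_tri_lt: "finite {u. length u = length v \<and> tri_lt u v}"
proof (rule finite_subset)
  show "{u. length u = length v \<and> tri_lt u v} \<subseteq> {u. set u \<subseteq> {..sum_list v} \<and> length u = length v}"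
  proof
    fix u assume "u \<in> {u. length u = length v \<and> tri_lt u v}"
    then have u: "length u = length v" "tri_le u v"
      by (simp_all add: tri_lt_def)
    then have "sum_list u \<le> sum_list v"
      by (intro sum_list_le_of_tri_le)
    then have "x \<le> sum_list v" if "x \<in> set u" for x
      using member_le_sum_list[OF that] by linarith
    then have "set u \<subseteq> {..sum_list v}"
      by auto
    then show "u \<in> {u. set u \<subseteq> {..sum_list v} \<and> length u = length v}"
      using u by simp
  qed
qed (simp add: finite_lists_length_eq)

lemma in_tensor_span_tri_le_coeffs:
  assumes "in_tensor_span lam N T0 (\<lambda>w. tri_le w v) f" "length v = N"
  shows "\<exists>c. (\<forall>u. c u \<in> cyclic_span lam N T0) \<and>
     f = (\<lambda>U. tensor v (c v) U + (\<Sum>u\<in>{u. length u = N \<and> tri_lt u v}. tensor u (c u) U))"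
  using assms(1)
proof induction
  case in_tensor_span_0
  show ?case
    by (rule exI[of _ "\<lambda>_ _. 0"]) (simp add: cyclic_span_0 tensor_def)
next
  case (in_tensor_span_tensor u a)
  let ?L = "{u. length u = N \<and> tri_lt u v}"
  define c where "c w = (if w = u then a else (\<lambda>_. 0))" for w
  have c: "tensor w (c w) U = (if w = u then tensor u a U else 0)" for w U
    by (simp add: c_def tensor_def)
  have "tensor v (c v) U + (\<Sum>w\<in>?L. tensor w (c w) U) = tensor u a U" for U
  proof (cases "u = v")
    case True
    then show ?thesis
      unfolding c by (simp add: tri_lt_def)
  next
    case False
    then have "u \<in> ?L"
      using in_tensor_span_tensor.hyps by (simp add: tri_lt_def)
    then show ?thesis
      unfolding c using False finite_tri_lt[of v] assms(2) by simp
  qed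
  moreover have "\<forall>w. c w \<in> cyclic_span lam N T0"
    using in_tensor_span_tensor.hyps cyclic_span_0 by (simp add: c_def)
  ultimately show ?case
    by (intro exI[of _ c]) auto
next
  case (in_tensor_span_add f g)
  then obtain c1 c2 where c: "\<forall>u. c1 u \<in> cyclic_span lam N T0" "\<forall>u. c2 u \<in> cyclic_span lam N T0"
    "f = (\<lambda>U. tensor v (c1 v) U + (\<Sum>u\<in>{u. length u = N \<and> tri_lt u v}. tensor u (c1 u) U))"
    "g = (\<lambda>U. tensor v (c2 v) U + (\<Sum>u\<in>{u. length u = N \<and> tri_lt u v}. tensor u (c2 u) U))"
    by blast
  have "(\<lambda>U. f U + g U) = (\<lambda>U. tensor v (\<lambda>U. c1 v U + c2 v U) U
      + (\<Sum>u\<in>{u. length u = N \<and> tri_lt u v}. tensor u (\<lambda>U. c1 u U + c2 u U) U))"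
    unfolding c(3,4) tensor_add by (simp add: sum.distrib add_ac)
  moreover have "\<forall>u. (\<lambda>U. c1 u U + c2 u U) \<in> cyclic_span lam N T0"
    using c(1,2) cyclic_span_add by blast
  ultimately show ?case
    by (intro exI[of _ "\<lambda>u U. c1 u U + c2 u U"]) simp
qed

theorem theorem3p4:
  fixes lam :: "nat list" and N j :: nat and v :: "nat list" and T :: tab
  assumes "2 \<le> N" and "is_partition lam N"
    and "length v = N" and "T \<in> Tab lam N"
    and "1 \<le> j" and "j \<le> N"
  shows "\<exists>H :: nat list \<Rightarrow> hecke.
           (\<forall>u. tri_le u v \<longrightarrow> is_hecke N (H u)) \<and>
           Xi lam N j (tensor v (basis T)) =
             (\<lambda>U. tensor v (hact lam N (basis T) (H v)) U
                 + (\<Sum>v'\<in>{v'. length v' = N \<and> tri_lt v' v}.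
                      tensor v' (hact lam N (basis T) (H v')) U))"
proof -
  have "in_tensor_span lam N T (\<lambda>w. tri_le w v) (Xi lam N j (tensor v (basis T)))"
    using assms(1,5,6,3) by (rule in_tensor_span_Xi)
  from in_tensor_span_tri_le_coeffs[OF this assms(3)] obtain c where c:
    "\<forall>u. c u \<in> cyclic_span lam N T"
    "Xi lam N j (tensor v (basis T))
       = (\<lambda>U. tensor v (c v) U + (\<Sum>u\<in>{u. length u = N \<and> tri_lt u v}. tensor u (c u) U))"
    by blast
  then have "\<forall>u. \<exists>h. is_hecke N h \<and> c u = hact lam N (basis T) h"
    by (auto simp: cyclic_span_def)
  then obtain H where H: "\<forall>u. is_hecke N (H u) \<and> c u = hact lam N (basis T) (H u)"
    using choice[of "\<lambda>u h. is_hecke N h \<and> c u = hact lam N (basis T) h"] by blast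
  then have "c = (\<lambda>u. hact lam N (basis T) (H u))"
    by auto
  with H c(2) show ?thesis
    by auto
qed

end
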